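(* Let $K$ be any field and $m,d\geq 1$. The quadruple $(G_{m\wr d}, B_m^d, N_{m\wr d}, \Sigma_m\wr\Sigma_d)$ is a generalized Tits system in the sense of Iwahori. More precisely: $B_m^d\cap N_{m\wr d}=T_m^d$ (the diagonal matrices of $\mathrm{GL}_{md}(K)$) is normal in $N_{m\wr d}$, $N_{m\wr d}/T_m^d\cong \Sigma_m\wr\Sigma_d\cong W_0\rtimes\Omega$ with $W_0=\Sigma_m^d$ (generated by the involutions $s_a^{(j)}$, $1\le a\le m-1$, $1\le j\le d$) and $\Omega=\{1\}\wr\Sigma_d\cong\Sigma_d$, every $t\in\Omega$ normalizes $B_m^d$ and the set $\{s_a^{(j)}\}$, $B_m^d t\neq B_m^d$ for $t\ne 1$, and for every generator $s=s_a^{(j)}$ and every $w\in\Sigma_m\wr\Sigma_d$ one has $sB_m^dw\subseteq B_m^dswB_m^d\cup B_m^dwB_m^d$ and $sB_m^d\neq B_m^d s$.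
   Context: Notation: $\Sigma_n$ is the symmetric group. The wreath product $\Sigma_m\wr\Sigma_d=\Sigma_m^d\rtimes\Sigma_d$ has multiplication determined by $w(g_1,\dots,g_d)=(g_{w^{-1}(1)},\dots,g_{w^{-1}(d)})w$; its elements are written $(w_i)_i\sigma$ with $w_i\in\Sigma_m$, $\sigma\in\Sigma_d$. For $g\in\Sigma_m$, $g^{(j)}$ denotes $(1,\dots,1,g,1,\dots,1)$ ($g$ in position $j$); $s_a=(a\ a{+}1)\in\Sigma_m$, and $t_k=(k\ k{+}1)\in\Sigma_d$. We regard $\Sigma_m\wr\Sigma_d\subseteq\Sigma_{md}$ via $(w_i)_i\sigma:(j-1)m+a\mapsto(\sigma(j)-1)m+w_{\sigma(j)}(a)$ ($1\le j\le d$, $1\le a\le m$). Over a field $K$: $\mathrm{GL}_n=\mathrm{GL}_n(K)$, $B_n$ its upper triangular matrices, $T_n$ its diagonal matrices. $N_{m\wr d}\subseteq\mathrm{GL}_{md}$ is the group of monomial matrices whose underlying permutation lies in $\Sigma_m\wr\Sigma_d\subseteq\Sigma_{md}$; $B_m^d\subseteq\mathrm{GL}_{md}$ is the group of block diagonal matrices $\mathrm{diag}(b_1,\dots,b_d)$ with $b_i\in B_m$; $G_{m\wr d}:=\langle B_m^d,N_{m\wr d}\rangle\subseteq\mathrm{GL}_{md}$. Elements of $\Sigma_m\wr\Sigma_d$ are identified with cosets in $N_{m\wr d}/T_m^d$, so expressions like $BwB$ are well defined. A generalized Tits system (Iwahori) is a quadruple $(G,B,N,W)$ with $G=\langle B,N\rangle$,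 $B\cap N$ normal in $N$, $W=N/(B\cap N)\cong W_0\rtimes\Omega$ where $W_0$ is generated by involutions $s_i$ ($i\in I$), every $t\in\Omega$ normalizes $B$ and $\{s_i\}$, $Bt\ne B$ unless $t=1$, and for all $s=s_i$, $w\in W$: $sBw\subseteq BswB\cup BwB$ and $sB\ne Bs$. *)

theory Defs
  imports "Jordan_Normal_Form.Matrix" "HOL-Algebra.Generated_Groups" "HOL-Algebra.Coset"
    "HOL-Combinatorics.Permutations"
begin

text \<open>Conventions: indices are 0-based.  The 1-based position (j-1)m+a of the paper
  (1 \<le> j \<le> d, 1 \<le> a \<le> m) is the 0-based position j*m+a with j < d, a < m.
  Permutations of {0..<n} are functions nat \<Rightarrow> nat that permute {..<n}
  (identity outside), composed by function composition.\<close>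

text \<open>The wreath product Sigma_m wr Sigma_d, regarded as a subgroup of Sigma_{md}:
  (w_i)_i sigma maps j*m+a to sigma(j)*m + w_{sigma(j)}(a).\<close>
definition wreath_perms :: "nat \<Rightarrow> nat \<Rightarrow> (nat \<Rightarrow> nat) set" where
  "wreath_perms m d = {\<pi>. \<pi> permutes {..<m*d} \<and>
     (\<exists>\<sigma> w. \<sigma> permutes {..<d} \<and> (\<forall>i<d. w i permutes {..<m}) \<and>
        (\<forall>j<d. \<forall>a<m. \<pi> (j*m+a) = \<sigma> j * m + w (\<sigma> j) a))}"

definition wreath_grp :: "nat \<Rightarrow> nat \<Rightarrow> (nat \<Rightarrow> nat) monoid" where
  "wreath_grp m d = \<lparr>carrier = wreath_perms m d, mult = (\<circ>), one = id\<rparr>"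

definition W0_perms :: "nat \<Rightarrow> nat \<Rightarrow> (nat \<Rightarrow> nat) set" where
  "W0_perms m d = {\<pi>. \<pi> permutes {..<m*d} \<and>
     (\<exists>w. (\<forall>i<d. w i permutes {..<m}) \<and> (\<forall>j<d. \<forall>a<m. \<pi> (j*m+a) = j * m + w j a))}"

definition Omega_perms :: "nat \<Rightarrow> nat \<Rightarrow> (nat \<Rightarrow> nat) set" where
  "Omega_perms m d = {\<pi>. \<pi> permutes {..<m*d} \<and>
     (\<exists>\<sigma>. \<sigma> permutes {..<d} \<and> (\<forall>j<d. \<forall>a<m. \<pi> (j*m+a) = \<sigma> j * m + a))}"

definition simple_refls :: "nat \<Rightarrow> nat \<Rightarrow> (nat \<Rightarrow> nat) set" where
  "simple_refls m d = {Transposition.transpose (j*m+a) (j*m+a+1) | j a. j < d \<and> a + 1 < m}"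

definition GL_grp :: "nat \<Rightarrow> 'a::field mat monoid" where
  "GL_grp n = \<lparr>carrier = {A \<in> carrier_mat n n. invertible_mat A}, mult = (*), one = 1\<^sub>m n\<rparr>"

definition perm_matrix :: "nat \<Rightarrow> (nat \<Rightarrow> nat) \<Rightarrow> 'a::field mat" where
  "perm_matrix n \<pi> = mat n n (\<lambda>(i,k). if i = \<pi> k then 1 else 0)"

definition T_md :: "nat \<Rightarrow> nat \<Rightarrow> 'a::field mat set" where
  "T_md m d = {A \<in> carrier_mat (m*d) (m*d). invertible_mat A \<and> diagonal_mat A}"

definition B_md :: "nat \<Rightarrow> nat \<Rightarrow> 'a::field mat set" where
  "B_md m d = {A \<in> carrier_mat (m*d) (m*d). invertible_mat A \<and>
     (\<forall>i<m*d. \<forall>j<m*d. A $$ (i,j) \<noteq> 0 \<longrightarrow> i div m = j div m \<and> i \<le> j)}"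

definition N_md :: "nat \<Rightarrow> nat \<Rightarrow> 'a::field mat set" where
  "N_md m d = {perm_matrix (m*d) \<pi> * D | \<pi> D. \<pi> \<in> wreath_perms m d \<and> D \<in> T_md m d}"

definition G_md :: "nat \<Rightarrow> nat \<Rightarrow> 'a::field mat set" where
  "G_md m d = generate (GL_grp (m*d)) (B_md m d \<union> N_md m d)"

definition N_grp :: "nat \<Rightarrow> nat \<Rightarrow> 'a::field mat monoid" where
  "N_grp m d = (GL_grp (m*d)) \<lparr>carrier := N_md m d\<rparr>"

definition G_grp :: "nat \<Rightarrow> nat \<Rightarrow> 'a::field mat monoid" where
  "G_grp m d = (GL_grp (m*d)) \<lparr>carrier := G_md m d\<rparr>"

definition triple_prod :: "'a::field mat set \<Rightarrow> 'a mat set \<Rightarrow> 'a mat set \<Rightarrow> 'a mat set" where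
  "triple_prod X Y Z = {x * y * z | x y z. x \<in> X \<and> y \<in> Y \<and> z \<in> Z}"

definition set_prod :: "'a::field mat set \<Rightarrow> 'a mat set \<Rightarrow> 'a mat set" where
  "set_prod X Y = {x * y | x y. x \<in> X \<and> y \<in> Y}"

end

theory Submission
  imports Defs "Jordan_Normal_Form.Determinant" "Jordan_Normal_Form.Column_Operations"
begin

text \<open>B is the group of invertible matrices supported
  on the block upper triangular pattern; any pattern given by a reflexive transitive relation
  contained in the order on indices yields a subgroup of GL_n, because solving X A = 1 column by column keeps
  the pattern. N consists of the products P_\<pi> D with \<pi> a block permutation and D invertible
  diagonal; the underlying permutation is a homomorphism onto the wreath product with kernel T,
  and B meets N only in T because a permutation with \<pi> k \<le> k for all k is the identity.
  \<Omega> normalizes B since its elements move whole blocks rigidly.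

  For the Tits axiom with s = (q q+1), write b = b' x(c), where x(c) = 1 + c E(q,q+1) and
  b'(q,q+1) = 0; then s b' s lies in B and s b w = (s b' s) s x(c) w. If c = 0 or
  inv w q < inv w (q+1), then x(c) w = w x' with x' upper triangular, so s b w lies in
  B sw B. Otherwise the GL_2 identity s x(c) = x(1/c) h x'(1/c), with h diagonal and x' the
  transposed root element, puts s b w into B w B.\<close>

abbreviation iv :: "(nat \<Rightarrow> nat) \<Rightarrow> nat \<Rightarrow> nat" where "iv \<equiv> Hilbert_Choice.inv"
  \<comment> \<open>the inverse permutation; the name inv is also used by HOL-Algebra\<close>

section \<open>Matrices over a field\<close>

lemma sum_eq_single:
  fixes f :: "nat \<Rightarrow> 'b::comm_monoid_add"
  assumes "c < n" "\<And>l. l < n \<Longrightarrow> l \<noteq> c \<Longrightarrow> f l = 0"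
  shows "(\<Sum>l\<in>{0..<n}. f l) = f c"
proof -
  have "(\<Sum>l\<in>{0..<n}. f l) = f c + (\<Sum>l\<in>{0..<n} - {c}. f l)"
    using assms(1) by (subst sum.remove[of _ c]) auto
  also have "(\<Sum>l\<in>{0..<n} - {c}. f l) = 0" using assms(2) by (intro sum.neutral) auto
  finally show ?thesis by simp
qed

lemma index_mult_mat_sum:
  "A \<in> carrier_mat n n \<Longrightarrow> B \<in> carrier_mat n n \<Longrightarrow> i < n \<Longrightarrow> k < n \<Longrightarrow>
   (A * B) $$ (i,k) = (\<Sum>l\<in>{0..<n}. A $$ (i,l) * B $$ (l,k))"
  by (simp add: scalar_prod_def)

lemma invertible_mat_right_inverse:
  fixes A :: "'a::field mat"
  assumes "A \<in> carrier_mat n n" "B \<in> carrier_mat n n" "A * B = 1\<^sub>m n"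
  shows "invertible_mat A"
  using mat_mult_left_right_inverse[OF assms] assms
  unfolding invertible_mat_def inverts_mat_def by (metis carrier_matD square_mat.simps)

lemma invertible_mat_one [simp]: "invertible_mat (1\<^sub>m n :: 'a::field mat)"
  using invertible_mat_right_inverse[of "1\<^sub>m n" n "1\<^sub>m n"] by simp

lemma invertible_mat_iff_det:
  fixes A :: "'a::field mat"
  assumes A: "A \<in> carrier_mat n n"
  shows "invertible_mat A \<longleftrightarrow> det A \<noteq> 0"
proof
  assume "invertible_mat A"
  then obtain B where AB: "A * B = 1\<^sub>m n" and BA: "B * A = 1\<^sub>m (dim_row B)"
    using A unfolding invertible_mat_def inverts_mat_def by auto
  have "B \<in> carrier_mat n n"
    using arg_cong[OF AB, of dim_col] arg_cong[OF BA, of dim_col] A by auto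
  then have "det A * det B = 1" using det_mult[OF A] AB by (metis det_one)
  then show "det A \<noteq> 0" by auto
next
  assume "det A \<noteq> 0"
  then have "A \<in> Units (ring_mat TYPE('a) n ())" by (rule det_non_zero_imp_unit[OF A])
  then obtain B where "B \<in> carrier_mat n n" "A * B = 1\<^sub>m n"
    unfolding Units_def ring_mat_def by auto
  then show "invertible_mat A" using invertible_mat_right_inverse A by blast
qed

lemma invertible_mat_mult:
  fixes A B :: "'a::field mat"
  assumes "A \<in> carrier_mat n n" "B \<in> carrier_mat n n" "invertible_mat A" "invertible_mat B"
  shows "invertible_mat (A * B)"
  using assms det_mult[OF assms(1,2)] invertible_mat_iff_det[OF mult_carrier_mat[OF assms(1,2)]]
  by (simp add: invertible_mat_iff_det)

lemma invertible_upper_triangular_diag: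
  fixes A :: "'a::field mat"
  assumes "A \<in> carrier_mat n n" "invertible_mat A" "upper_triangular A" "i < n"
  shows "A $$ (i,i) \<noteq> 0"
proof -
  have "prod_list (diag_mat A) \<noteq> 0"
    using assms det_upper_triangular invertible_mat_iff_det by metis
  then show ?thesis using assms unfolding diag_mat_def by (auto simp: prod_list_zero_iff)
qed

lemma GL_grp_simps:
  "carrier (GL_grp n) = {A \<in> carrier_mat n n. invertible_mat A}"
  "mult (GL_grp n) = (*)" "one (GL_grp n) = 1\<^sub>m n"
  by (auto simp: GL_grp_def)

lemma group_GL_grp: "group (GL_grp n :: 'a::field mat monoid)"
proof (rule groupI)
  fix x assume "x \<in> carrier (GL_grp n :: 'a mat monoid)"
  then have x: "x \<in> carrier_mat n n" "det x \<noteq> 0" by (auto simp: GL_grp_simps invertible_mat_iff_det)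
  then obtain y where y: "y \<in> carrier_mat n n" "y * x = 1\<^sub>m n"
    using det_non_zero_imp_unit[OF x, of "()"] unfolding Units_def ring_mat_def by auto
  then show "\<exists>y\<in>carrier (GL_grp n). y \<otimes>\<^bsub>GL_grp n\<^esub> x = \<one>\<^bsub>GL_grp n\<^esub>"
    using invertible_mat_right_inverse[OF y(1) x(1) y(2)] by (auto simp: GL_grp_simps)
next
  fix x y z :: "'a mat"
  assume "x \<in> carrier (GL_grp n)" "y \<in> carrier (GL_grp n)" "z \<in> carrier (GL_grp n)"
  then show "x \<otimes>\<^bsub>GL_grp n\<^esub> y \<otimes>\<^bsub>GL_grp n\<^esub> z = x \<otimes>\<^bsub>GL_grp n\<^esub> (y \<otimes>\<^bsub>GL_grp n\<^esub> z)"
    by (simp add: GL_grp_simps assoc_mult_mat[of _ n n _ n _ n])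
qed (use invertible_mat_mult in \<open>auto simp: GL_grp_simps\<close>)

lemma GL_grp_inv:
  fixes A :: "'a::field mat"
  assumes "A \<in> carrier (GL_grp n)"
  shows "inv\<^bsub>GL_grp n\<^esub> A \<in> carrier (GL_grp n)" "inv\<^bsub>GL_grp n\<^esub> A * A = 1\<^sub>m n"
  using group.inv_closed[OF group_GL_grp assms] group.l_inv[OF group_GL_grp assms]
  by (auto simp: GL_grp_simps)

definition mat_support_in :: "(nat \<Rightarrow> nat \<Rightarrow> bool) \<Rightarrow> nat \<Rightarrow> 'a::field mat \<Rightarrow> bool" where
  "mat_support_in R n A \<longleftrightarrow> (\<forall>i<n. \<forall>k<n. A $$ (i,k) \<noteq> 0 \<longrightarrow> R i k)"

lemma mat_support_in_mult:
  fixes A B :: "'a::field mat"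
  assumes trans: "\<And>i j k. R i j \<Longrightarrow> R j k \<Longrightarrow> R i k"
    and A: "A \<in> carrier_mat n n" "mat_support_in R n A"
    and B: "B \<in> carrier_mat n n" "mat_support_in R n B"
  shows "mat_support_in R n (A * B)"
  unfolding mat_support_in_def
proof (intro allI impI)
  fix i k assume ik: "i < n" "k < n" and "(A * B) $$ (i,k) \<noteq> 0"
  then have "(\<Sum>l\<in>{0..<n}. A $$ (i,l) * B $$ (l,k)) \<noteq> 0"
    using index_mult_mat_sum[OF A(1) B(1) ik] by simp
  then obtain l where "l < n" "A $$ (i,l) * B $$ (l,k) \<noteq> 0"
    by (metis (no_types, lifting) atLeastLessThan_iff sum.neutral)
  then have "R i l" "R l k" using A(2) B(2) ik unfolding mat_support_in_def by auto
  then show "R i k" by (rule trans)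
qed

text \<open>Solving X A = 1 for row i of X column by column, in increasing order, shows that
  X(i,l) = 0 whenever R i l fails.\<close>
lemma mat_support_in_left_inverse:
  fixes A X :: "'a::field mat"
  assumes trans: "\<And>i j k. R i j \<Longrightarrow> R j k \<Longrightarrow> R i k"
    and refl: "\<And>i. R i i" and le: "\<And>i k. R i k \<Longrightarrow> i \<le> k"
    and A: "A \<in> carrier_mat n n" "mat_support_in R n A" and diag: "\<And>l. l < n \<Longrightarrow> A $$ (l,l) \<noteq> 0"
    and X: "X \<in> carrier_mat n n" "X * A = 1\<^sub>m n"
  shows "mat_support_in R n X"
proof -
  have "X $$ (i,l) = 0" if i: "i < n" and "l < n" "\<not> R i l" for i l
    using that(2,3)
  proof (induction l rule: less_induct)
    case (less l)
    have "0 = (X * A) $$ (i,l)" using X(2) i less.prems refl by auto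
    also have "\<dots> = (\<Sum>l'\<in>{0..<n}. X $$ (i,l') * A $$ (l',l))"
      using index_mult_mat_sum[OF X(1) A(1) i less.prems(1)] .
    also have "\<dots> = X $$ (i,l) * A $$ (l,l)"
    proof (rule sum_eq_single[OF less.prems(1)])
      fix l' assume l': "l' < n" "l' \<noteq> l"
      show "X $$ (i,l') * A $$ (l',l) = 0"
      proof (cases "A $$ (l',l) = 0")
        case False
        then have "R l' l" using A(2) less.prems l' unfolding mat_support_in_def by auto
        then have "l' < l" "\<not> R i l'" using le[of l' l] l' less.prems trans[of i l' l] by auto
        then show ?thesis using less.IH l' by auto
      qed simp
    qed
    finally show "X $$ (i,l) = 0" using diag[OF less.prems(1)] by simp
  qed
  then show ?thesis unfolding mat_support_in_def by blast
qed

lemma subgroup_mat_support_in: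
  assumes trans: "\<And>i j k. R i j \<Longrightarrow> R j k \<Longrightarrow> R i k"
    and refl: "\<And>i. R i i" and le: "\<And>i k. R i k \<Longrightarrow> i \<le> k"
  shows "subgroup {A \<in> carrier_mat n n. invertible_mat A \<and> mat_support_in R n A}
     (GL_grp n :: 'a::field mat monoid)"
proof (rule group.subgroupI[OF group_GL_grp])
  show "{A \<in> carrier_mat n n. invertible_mat A \<and> mat_support_in R n A} \<noteq> {}"
    using refl by (auto intro!: exI[of _ "1\<^sub>m n"] simp: mat_support_in_def)
next
  fix A :: "'a mat"
  assume "A \<in> {A \<in> carrier_mat n n. invertible_mat A \<and> mat_support_in R n A}"
  then have A: "A \<in> carrier_mat n n" "invertible_mat A" "mat_support_in R n A" by auto
  have "upper_triangular A" unfolding upper_triangular_def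
  proof (intro allI impI)
    fix i j assume ij: "i < dim_row A" "j < i"
    then have "i < n" "j < n" "\<not> R i j" using A(1) le[of i j] by auto
    then show "A $$ (i,j) = 0" using A(3) unfolding mat_support_in_def by blast
  qed
  then have diag: "A $$ (l,l) \<noteq> 0" if "l < n" for l
    using invertible_upper_triangular_diag A(1,2) that by blast
  have "A \<in> carrier (GL_grp n)" using A by (simp add: GL_grp_simps)
  note inv = GL_grp_inv[OF this]
  then show "inv\<^bsub>GL_grp n\<^esub> A \<in> {A \<in> carrier_mat n n. invertible_mat A \<and> mat_support_in R n A}"
    using mat_support_in_left_inverse[OF trans refl le A(1,3) diag] by (simp add: GL_grp_simps)
next
  fix A B :: "'a mat"
  assume "A \<in> {A \<in> carrier_mat n n. invertible_mat A \<and> mat_support_in R n A}"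
    "B \<in> {A \<in> carrier_mat n n. invertible_mat A \<and> mat_support_in R n A}"
  then have A: "A \<in> carrier_mat n n" "invertible_mat A" "mat_support_in R n A"
    and B: "B \<in> carrier_mat n n" "invertible_mat B" "mat_support_in R n B" by auto
  show "A \<otimes>\<^bsub>GL_grp n\<^esub> B \<in> {A \<in> carrier_mat n n. invertible_mat A \<and> mat_support_in R n A}"
    using invertible_mat_mult[OF A(1) B(1) A(2) B(2)] mat_support_in_mult[OF trans A(1,3) B(1,3)] A B
    by (simp add: GL_grp_simps)
qed (auto simp: GL_grp_simps)

lemma perm_matrix_carrier [simp]: "perm_matrix n \<pi> \<in> carrier_mat n n"
  by (simp add: perm_matrix_def)

lemma index_perm_matrix [simp]:
  "i < n \<Longrightarrow> k < n \<Longrightarrow> perm_matrix n \<pi> $$ (i,k) = (if i = \<pi> k then 1 else 0)"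
  by (simp add: perm_matrix_def)

lemma index_perm_matrix_mult:
  assumes p: "\<pi> permutes {..<n}" and A: "A \<in> carrier_mat n n" and ik: "i < n" "k < n"
  shows "(perm_matrix n \<pi> * A) $$ (i,k) = A $$ (iv \<pi> i, k)"
proof -
  have iv: "iv \<pi> i < n" using p ik permutes_inv permutes_in_image by fastforce
  have "(perm_matrix n \<pi> * A) $$ (i,k) = (\<Sum>l\<in>{0..<n}. perm_matrix n \<pi> $$ (i,l) * A $$ (l,k))"
    using A ik by (intro index_mult_mat_sum) auto
  also have "\<dots> = perm_matrix n \<pi> $$ (i,iv \<pi> i) * A $$ (iv \<pi> i,k)"
    using ik iv by (intro sum_eq_single) (auto simp: permutes_inverses[OF p])
  finally show ?thesis using ik iv by (simp add: permutes_inverses[OF p])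
qed

lemma index_mult_perm_matrix:
  assumes p: "\<pi> permutes {..<n}" and A: "A \<in> carrier_mat n n" and ik: "i < n" "k < n"
  shows "(A * perm_matrix n \<pi>) $$ (i,k) = A $$ (i, \<pi> k)"
proof -
  have pk: "\<pi> k < n" using p ik permutes_in_image by fastforce
  have "(A * perm_matrix n \<pi>) $$ (i,k) = (\<Sum>l\<in>{0..<n}. A $$ (i,l) * perm_matrix n \<pi> $$ (l,k))"
    using A ik by (intro index_mult_mat_sum) auto
  also have "\<dots> = A $$ (i,\<pi> k) * perm_matrix n \<pi> $$ (\<pi> k, k)"
    using ik pk by (intro sum_eq_single) auto
  finally show ?thesis using ik pk by simp
qed

lemma index_perm_matrix_conj:
  assumes p: "\<pi> permutes {..<n}" and A: "A \<in> carrier_mat n n" and ik: "i < n" "k < n"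
  shows "(perm_matrix n \<pi> * A * perm_matrix n (iv \<pi>)) $$ (i,k) = A $$ (iv \<pi> i, iv \<pi> k)"
  using index_mult_perm_matrix[OF permutes_inv[OF p] mult_carrier_mat[OF perm_matrix_carrier A] ik]
    index_perm_matrix_mult[OF p A ik(1)] permutes_in_image[OF permutes_inv[OF p]] ik
  by simp

lemma perm_matrix_mult:
  assumes p: "\<pi> permutes {..<n}" and r: "\<rho> permutes {..<n}"
  shows "perm_matrix n \<pi> * perm_matrix n \<rho> = perm_matrix n (\<pi> \<circ> \<rho>)"
proof (rule eq_matI)
  fix i k assume "i < dim_row (perm_matrix n (\<pi> \<circ> \<rho>))" "k < dim_col (perm_matrix n (\<pi> \<circ> \<rho>))"
  then have ik: "i < n" "k < n" by (auto simp: perm_matrix_def)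
  moreover have "iv \<pi> i < n" using p ik permutes_inv permutes_in_image by fastforce
  ultimately show "(perm_matrix n \<pi> * perm_matrix n \<rho>) $$ (i,k) = perm_matrix n (\<pi> \<circ> \<rho>) $$ (i,k)"
    by (auto simp: index_perm_matrix_mult[OF p] permutes_inverses[OF p] permutes_inv_eq[OF p])
qed (auto simp: perm_matrix_def)

lemma perm_matrix_id: "perm_matrix n id = 1\<^sub>m n"
  by (rule eq_matI) (auto simp: perm_matrix_def)

lemma invertible_perm_matrix:
  assumes "\<pi> permutes {..<n}"
  shows "invertible_mat (perm_matrix n \<pi> :: 'a::field mat)"
  using perm_matrix_mult[OF assms permutes_inv[OF assms]] permutes_inv_o(1)[OF assms]
  by (intro invertible_mat_right_inverse[where B = "perm_matrix n (iv \<pi>)"]) (auto simp: perm_matrix_id)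

definition monomial_mat :: "nat \<Rightarrow> (nat \<Rightarrow> nat) \<Rightarrow> 'a::field mat \<Rightarrow> bool" where
  "monomial_mat n \<pi> A \<longleftrightarrow> A \<in> carrier_mat n n \<and> (\<forall>i<n. \<forall>k<n. A $$ (i,k) \<noteq> 0 \<longleftrightarrow> i = \<pi> k)"

lemma monomial_mat_perm_matrix: "\<pi> permutes {..<n} \<Longrightarrow> monomial_mat n \<pi> (perm_matrix n \<pi>)"
  unfolding monomial_mat_def by auto

lemma monomial_mat_mult:
  assumes p: "\<pi> permutes {..<n}" and r: "\<rho> permutes {..<n}"
    and A: "monomial_mat n \<pi> A" and B: "monomial_mat n \<rho> B"
  shows "monomial_mat n (\<pi> \<circ> \<rho>) (A * B)"
  unfolding monomial_mat_def
proof (intro conjI allI impI)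
  have Ac: "A \<in> carrier_mat n n" and Bc: "B \<in> carrier_mat n n" using A B by (auto simp: monomial_mat_def)
  then show "A * B \<in> carrier_mat n n" by simp
  fix i k assume ik: "i < n" "k < n"
  have rk: "\<rho> k < n" using r ik permutes_in_image by fastforce
  have "(A * B) $$ (i,k) = A $$ (i, \<rho> k) * B $$ (\<rho> k, k)"
    unfolding index_mult_mat_sum[OF Ac Bc ik]
    using B ik rk by (intro sum_eq_single) (auto simp: monomial_mat_def)
  then show "(A * B) $$ (i,k) \<noteq> 0 \<longleftrightarrow> i = (\<pi> \<circ> \<rho>) k"
    using A B ik rk by (auto simp: monomial_mat_def)
qed

text \<open>The inverse of a monomial matrix is obtained by transposing it and inverting its
  nonzero entries.\<close>
lemma monomial_mat_inverse:
  fixes A :: "'a::field mat"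
  assumes p: "\<pi> permutes {..<n}" and A: "monomial_mat n \<pi> A"
  obtains Y where "monomial_mat n (iv \<pi>) Y" "A * Y = 1\<^sub>m n" "Y * A = 1\<^sub>m n"
proof -
  have Ac: "A \<in> carrier_mat n n" using A by (auto simp: monomial_mat_def)
  define Y where "Y = mat n n (\<lambda>(i,k). if k = \<pi> i then 1 / A $$ (k,i) else (0::'a))"
  have Yc: "Y \<in> carrier_mat n n" by (simp add: Y_def)
  have AY: "A * Y = 1\<^sub>m n"
  proof (rule eq_matI)
    fix i k assume "i < dim_row (1\<^sub>m n :: 'a mat)" "k < dim_col (1\<^sub>m n :: 'a mat)"
    then have ik: "i < n" "k < n" by auto
    have ik': "iv \<pi> k < n" using p ik permutes_inv permutes_in_image by fastforce
    have "(A * Y) $$ (i,k) = A $$ (i, iv \<pi> k) * Y $$ (iv \<pi> k, k)"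
      unfolding index_mult_mat_sum[OF Ac Yc ik]
      using ik ik' by (intro sum_eq_single) (auto simp: Y_def permutes_inverses[OF p])
    also have "\<dots> = (if i = k then 1 else 0)"
    proof -
      have "A $$ (i, iv \<pi> k) \<noteq> 0 \<longleftrightarrow> i = \<pi> (iv \<pi> k)" using A ik ik' unfolding monomial_mat_def by blast
      then show ?thesis using ik ik' by (auto simp: Y_def permutes_inverses[OF p])
    qed
    finally show "(A * Y) $$ (i,k) = 1\<^sub>m n $$ (i,k)" using ik by simp
  qed (use Ac Yc in auto)
  have "monomial_mat n (iv \<pi>) Y"
    unfolding monomial_mat_def
  proof (intro conjI allI impI)
    fix i k assume ik: "i < n" "k < n"
    have "\<pi> i < n" using permutes_in_image[OF p] ik by simp
    then have "A $$ (\<pi> i, i) \<noteq> 0" using A ik unfolding monomial_mat_def by blast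
    then show "Y $$ (i,k) \<noteq> 0 \<longleftrightarrow> i = iv \<pi> k"
      using ik by (auto simp: Y_def permutes_inv_eq[OF p] permutes_inverses[OF p])
  qed (rule Yc)
  then show ?thesis using that AY mat_mult_left_right_inverse[OF Ac Yc AY] by blast
qed

lemma invertible_monomial_mat:
  assumes "\<pi> permutes {..<n}" "monomial_mat n \<pi> (A :: 'a::field mat)"
  shows "invertible_mat A"
  using monomial_mat_inverse[OF assms] assms(2)
  by (metis invertible_mat_right_inverse monomial_mat_def)

lemma monomial_mat_diag_iff: "monomial_mat n id (mat_diag n f) \<longleftrightarrow> (\<forall>k<n. f k \<noteq> 0)"
  by (auto simp: monomial_mat_def mat_diag_def)

lemma monomial_mat_eq_perm_matrix_mult_diag:
  assumes p: "\<pi> permutes {..<n}" and A: "monomial_mat n \<pi> A"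
  shows "A = perm_matrix n \<pi> * mat_diag n (\<lambda>k. A $$ (\<pi> k, k))"
proof (rule eq_matI)
  have Ac: "A \<in> carrier_mat n n" using A by (simp add: monomial_mat_def)
  fix i k assume "i < dim_row (perm_matrix n \<pi> * mat_diag n (\<lambda>k. A $$ (\<pi> k, k)))"
    "k < dim_col (perm_matrix n \<pi> * mat_diag n (\<lambda>k. A $$ (\<pi> k, k)))"
  then have ik: "i < n" "k < n" by (auto simp: perm_matrix_def mat_diag_def)
  moreover have "iv \<pi> i < n" using permutes_in_image[OF permutes_inv[OF p]] ik by simp
  moreover have "A $$ (i,k) = 0" if "i \<noteq> \<pi> k" using A ik that unfolding monomial_mat_def by blast
  ultimately show "A $$ (i,k) = (perm_matrix n \<pi> * mat_diag n (\<lambda>k. A $$ (\<pi> k, k))) $$ (i,k)"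
    by (auto simp: index_perm_matrix_mult[OF p] mat_diag_def permutes_inverses[OF p]
        permutes_inv_eq[OF p])
qed (use A in \<open>auto simp: perm_matrix_def monomial_mat_def mat_diag_def\<close>)

definition mat_perm :: "nat \<Rightarrow> 'a::field mat \<Rightarrow> nat \<Rightarrow> nat" where
  "mat_perm n A = (\<lambda>k. if k < n then (THE i. i < n \<and> A $$ (i,k) \<noteq> 0) else k)"

lemma mat_perm_monomial_mat:
  assumes p: "\<pi> permutes {..<n}" and A: "monomial_mat n \<pi> A"
  shows "mat_perm n A = \<pi>"
proof
  fix k show "mat_perm n A k = \<pi> k"
  proof (cases "k < n")
    case True
    then have "\<pi> k < n" using p permutes_in_image by fastforce
    then have "(THE i. i < n \<and> A $$ (i,k) \<noteq> 0) = \<pi> k"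
      using A True unfolding monomial_mat_def by (intro the_equality) auto
    then show ?thesis using True by (simp add: mat_perm_def)
  qed (use p in \<open>simp add: mat_perm_def permutes_def\<close>)
qed

lemma addrow_mat_mult_perm_matrix:
  assumes p: "\<pi> permutes {..<n}" and k: "k < n" "l < n"
  shows "addrow_mat n c k l * perm_matrix n \<pi> = perm_matrix n \<pi> * addrow_mat n c (iv \<pi> k) (iv \<pi> l)"
proof (rule eq_matI)
  fix i j assume "i < dim_row (perm_matrix n \<pi> * addrow_mat n c (iv \<pi> k) (iv \<pi> l))"
    "j < dim_col (perm_matrix n \<pi> * addrow_mat n c (iv \<pi> k) (iv \<pi> l))"
  then have ij: "i < n" "j < n" by (auto simp: perm_matrix_def)
  moreover have "iv \<pi> i < n" "\<pi> j < n" using permutes_in_image[OF permutes_inv[OF p]] 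
      permutes_in_image[OF p] ij by auto
  ultimately show "(addrow_mat n c k l * perm_matrix n \<pi>) $$ (i,j)
      = (perm_matrix n \<pi> * addrow_mat n c (iv \<pi> k) (iv \<pi> l)) $$ (i,j)"
    by (auto simp: index_perm_matrix_mult[OF p] index_mult_perm_matrix[OF p]
        permutes_inverses[OF p] permutes_inv_eq[OF p])
qed (auto simp: perm_matrix_def)

lemma mat_diag_mult_perm_matrix:
  assumes p: "\<pi> permutes {..<n}"
  shows "mat_diag n f * perm_matrix n \<pi> = perm_matrix n \<pi> * mat_diag n (f \<circ> \<pi>)"
proof (rule eq_matI)
  fix i j assume "i < dim_row (perm_matrix n \<pi> * mat_diag n (f \<circ> \<pi>))"
    "j < dim_col (perm_matrix n \<pi> * mat_diag n (f \<circ> \<pi>))"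
  then have ij: "i < n" "j < n" by (auto simp: perm_matrix_def mat_diag_def)
  moreover have "iv \<pi> i < n" "\<pi> j < n" using permutes_in_image[OF permutes_inv[OF p]] 
      permutes_in_image[OF p] ij by auto
  ultimately show "(mat_diag n f * perm_matrix n \<pi>) $$ (i,j) = (perm_matrix n \<pi> * mat_diag n (f \<circ> \<pi>)) $$ (i,j)"
    by (auto simp: index_perm_matrix_mult[OF p] index_mult_perm_matrix[OF p] mat_diag_def
        permutes_inverses[OF p] permutes_inv_eq[OF p])
qed (auto simp: perm_matrix_def mat_diag_def)

text \<open>The identity (0 1; 1 c) = (1 1/c; 0 1) diag(-1/c, c) (1 0; 1/c 1) of GL_2, placed in rows
  and columns p and r.\<close>
lemma perm_matrix_transpose_mult_addrow_mat:
  fixes c :: "'a::field"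
  assumes pr: "p < n" "r < n" "p \<noteq> r" and c: "c \<noteq> 0"
  shows "perm_matrix n (Transposition.transpose p r) * addrow_mat n c p r
    = addrow_mat n (1/c) p r * mat_diag n (\<lambda>x. if x = p then - 1/c else if x = r then c else 1)
      * addrow_mat n (1/c) r p"
    (is "?L = ?U * ?D * ?V")
proof (rule eq_matI)
  have s: "Transposition.transpose p r permutes {..<n}" using pr by (intro permutes_swap_id) auto
  have UD: "?U * ?D = mat n n (\<lambda>(i,j). ?U $$ (i,j) * (if j = p then - 1/c else if j = r then c else 1))"
    by (rule mat_diag_mult_right) simp
  fix i k assume "i < dim_row (?U * ?D * ?V)" "k < dim_col (?U * ?D * ?V)"
  then have ik: "i < n" "k < n" by auto
  have "(?U * ?D * ?V) $$ (i,k) = addcol (1/c) p r (?U * ?D) $$ (i,k)"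
    using addcol_mat[of "?U * ?D" n n r "1/c" p] pr by (simp add: mult_carrier_mat[of _ n n _ n])
  also have "\<dots> = ?L $$ (i,k)"
    using ik pr c by (auto simp: UD index_perm_matrix_mult[OF s] transpose_def field_simps)
  finally show "?L $$ (i,k) = (?U * ?D * ?V) $$ (i,k)" by simp
qed (auto simp: perm_matrix_def)

section \<open>The wreath product as a group of block permutations\<close>

lemma block_index_less: "j < d \<Longrightarrow> a < m \<Longrightarrow> j*m + a < m*(d::nat)"
proof -
  assume "j < d" "a < m"
  then have "j*m + a < Suc j * m" by simp
  also have "\<dots> \<le> d*m" using \<open>j < d\<close> by (intro mult_le_mono1) simp
  finally show ?thesis by (simp add: mult.commute)
qed

lemma block_div_less: "x < m*d \<Longrightarrow> x div m < (d::nat)"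
  by (simp add: less_mult_imp_div_less mult.commute)

lemma block_eq_image: "0 < (m::nat) \<Longrightarrow> c < d \<Longrightarrow> {y. y < m*d \<and> y div m = c} = (\<lambda>a. c*m + a) ` {..<m}"
proof (intro Set.set_eqI iffI)
  fix y assume "0 < m" "y \<in> {y. y < m*d \<and> y div m = c}"
  then have "y = c*m + y mod m" "y mod m < m" by (auto simp: div_mult_mod_eq)
  then show "y \<in> (\<lambda>a. c*m + a) ` {..<m}" by blast
qed (auto simp: block_index_less)

lemma card_block: "0 < (m::nat) \<Longrightarrow> c < d \<Longrightarrow> card {y. y < m*d \<and> y div m = c} = m"
  by (subst block_eq_image) (auto simp: card_image inj_on_def)

text \<open>The permutations of {0..<md} mapping every block {jm..<jm+m} into a block; by
  wreath_perms_eq they form the wreath product.\<close>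
definition block_perm :: "nat \<Rightarrow> nat \<Rightarrow> (nat \<Rightarrow> nat) \<Rightarrow> bool" where
  "block_perm m d \<pi> \<longleftrightarrow> \<pi> permutes {..<m*d} \<and>
     (\<forall>x<m*d. \<forall>y<m*d. x div m = y div m \<longrightarrow> \<pi> x div m = \<pi> y div m)"

lemma block_perm_permutes: "block_perm m d \<pi> \<Longrightarrow> \<pi> permutes {..<m*d}"
  by (simp add: block_perm_def)

lemma block_perm_div_eq:
  "block_perm m d \<pi> \<Longrightarrow> x < m*d \<Longrightarrow> y < m*d \<Longrightarrow> x div m = y div m \<Longrightarrow> \<pi> x div m = \<pi> y div m"
  unfolding block_perm_def by blast

lemma block_perm_id: "block_perm m d id"
  by (simp add: block_perm_def permutes_id)

lemma block_perm_comp: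
  assumes \<pi>: "block_perm m d \<pi>" and \<rho>: "block_perm m d \<rho>"
  shows "block_perm m d (\<pi> \<circ> \<rho>)"
  unfolding block_perm_def
proof (intro conjI allI impI)
  show "\<pi> \<circ> \<rho> permutes {..<m*d}"
    using permutes_compose[OF block_perm_permutes[OF \<rho>] block_perm_permutes[OF \<pi>]] .
  fix x y assume xy: "x < m*d" "y < m*d" "x div m = y div m"
  then have "\<rho> x < m*d" "\<rho> y < m*d"
    using permutes_in_image[OF block_perm_permutes[OF \<rho>]] by auto
  moreover have "\<rho> x div m = \<rho> y div m" using block_perm_div_eq[OF \<rho> xy] .
  ultimately show "(\<pi> \<circ> \<rho>) x div m = (\<pi> \<circ> \<rho>) y div m" unfolding o_def by (rule block_perm_div_eq[OF \<pi>])
qed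

lemma block_perm_image_block:
  assumes m: "0 < m" and \<pi>: "block_perm m d \<pi>" and x: "x < m*d"
  shows "\<pi> ` {y. y < m*d \<and> y div m = x div m} = {y. y < m*d \<and> y div m = \<pi> x div m}"
proof (rule card_subset_eq)
  have p: "\<pi> permutes {..<m*d}" using \<pi> by (rule block_perm_permutes)
  show "\<pi> ` {y. y < m*d \<and> y div m = x div m} \<subseteq> {y. y < m*d \<and> y div m = \<pi> x div m}"
  proof (rule image_subsetI)
    fix y assume y: "y \<in> {y. y < m*d \<and> y div m = x div m}"
    then have "\<pi> y div m = \<pi> x div m" by (intro block_perm_div_eq[OF \<pi> _ x]) auto
    moreover have "\<pi> y < m*d" using y permutes_in_image[OF p] by simp
    ultimately show "\<pi> y \<in> {y. y < m*d \<and> y div m = \<pi> x div m}" by simp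
  qed
  have "card (\<pi> ` {y. y < m*d \<and> y div m = x div m}) = card {y. y < m*d \<and> y div m = x div m}"
    using permutes_inj[OF p] by (intro card_image) (simp add: inj_on_def inj_def)
  also have "\<dots> = card {y. y < m*d \<and> y div m = \<pi> x div m}"
    using m x permutes_in_image[OF p] by (simp add: card_block block_div_less)
  finally show "card (\<pi> ` {y. y < m*d \<and> y div m = x div m}) = card {y. y < m*d \<and> y div m = \<pi> x div m}" .
qed auto

lemma block_perm_inv:
  assumes m: "0 < m" and \<pi>: "block_perm m d \<pi>"
  shows "block_perm m d (iv \<pi>)"
proof -
  have p: "\<pi> permutes {..<m*d}" using \<pi> by (rule block_perm_permutes)
  have "iv \<pi> x div m = iv \<pi> y div m" if xy: "x < m*d" "y < m*d" "x div m = y div m" for x y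
  proof -
    have u: "iv \<pi> x < m*d" using xy permutes_in_image[OF permutes_inv[OF p]] by simp
    then have "y \<in> \<pi> ` {z. z < m*d \<and> z div m = iv \<pi> x div m}"
      using block_perm_image_block[OF m \<pi> u] xy by (simp add: permutes_inverses[OF p])
    then show ?thesis by (auto simp: permutes_inverses[OF p])
  qed
  then show ?thesis using permutes_inv[OF p] unfolding block_perm_def by blast
qed

lemma block_perm_induced_perm:
  assumes m: "0 < m" and \<pi>: "block_perm m d \<pi>"
  obtains \<sigma> where "\<sigma> permutes {..<d}" "\<And>x. x < m*d \<Longrightarrow> \<pi> x div m = \<sigma> (x div m)"
proof -
  have p: "\<pi> permutes {..<m*d}" using \<pi> by (rule block_perm_permutes)
  define \<sigma> where "\<sigma> = (\<lambda>j. if j < d then \<pi> (j*m) div m else j)"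
  have jm: "j*m < m*d" if "j < d" for j using block_index_less[OF that m] by simp
  have blocks: "\<pi> x div m = \<sigma> (x div m)" if x: "x < m*d" for x
  proof -
    have "x div m * m < m*d" "(x div m * m) div m = x div m"
      using jm block_div_less[OF x] m by auto
    then have "\<pi> x div m = \<pi> (x div m * m) div m"
      using block_perm_div_eq[OF \<pi> x, of "x div m * m"] by simp
    then show ?thesis using block_div_less[OF x] by (simp add: \<sigma>_def)
  qed
  have "\<sigma> permutes {..<d}"
  proof (rule inj_imp_permutes)
    show "inj_on \<sigma> {..<d}"
    proof (rule inj_onI)
      fix j j' assume j: "j \<in> {..<d}" "j' \<in> {..<d}" and "\<sigma> j = \<sigma> j'"
      then have "\<pi> (j'*m) div m = \<pi> (j*m) div m" by (simp add: \<sigma>_def)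
      moreover have "\<pi> (j'*m) < m*d" using permutes_in_image[OF p] jm j by simp
      ultimately have "\<pi> (j'*m) \<in> \<pi> ` {y. y < m*d \<and> y div m = (j*m) div m}"
        using block_perm_image_block[OF m \<pi> jm[of j]] j by simp
      then have "j'*m \<in> {y. y < m*d \<and> y div m = (j*m) div m}"
        using inj_image_mem_iff[OF permutes_inj[OF p]] by blast
      then show "j = j'" using m by simp
    qed
    show "\<sigma> j \<in> {..<d}" if "j \<in> {..<d}" for j
    proof -
      have "\<pi> (j*m) < m*d" using permutes_in_image[OF p] jm that by simp
      then show ?thesis using that block_div_less by (simp add: \<sigma>_def)
    qed
  qed (simp_all add: \<sigma>_def)
  then show ?thesis using that blocks by blast
qed

lemma mod_div_eqI: "x div (m::nat) = y div m \<Longrightarrow> x mod m = y mod m \<Longrightarrow> x = y"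
  by (metis div_mult_mod_eq)

lemma permutes_positions_in_block:
  fixes \<pi> :: "nat \<Rightarrow> nat"
  assumes m: "0 < m" and inj: "inj \<pi>" and block: "\<And>a. a < m \<Longrightarrow> \<pi> (j*m + a) div m = i"
  shows "(\<lambda>a. if a < m then \<pi> (j*m + a) mod m else a) permutes {..<m}"
proof (rule inj_imp_permutes)
  show "inj_on (\<lambda>a. if a < m then \<pi> (j*m + a) mod m else a) {..<m}"
  proof (rule inj_onI)
    fix a b assume ab: "a \<in> {..<m}" "b \<in> {..<m}"
      and eq: "(if a < m then \<pi> (j*m + a) mod m else a) = (if b < m then \<pi> (j*m + b) mod m else b)"
    have "\<pi> (j*m + a) = \<pi> (j*m + b)"
    proof (rule mod_div_eqI)
      show "\<pi> (j*m + a) div m = \<pi> (j*m + b) div m" using ab by (simp add: block)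
      show "\<pi> (j*m + a) mod m = \<pi> (j*m + b) mod m" using ab eq by simp
    qed
    then have "j*m + a = j*m + b" by (rule injD[OF inj])
    then show "a = b" by simp
  qed
qed (use m in auto)

lemma block_perm_in_wreath_perms:
  assumes m: "0 < m" and \<pi>: "block_perm m d \<pi>"
  shows "\<pi> \<in> wreath_perms m d"
proof -
  have p: "\<pi> permutes {..<m*d}" using \<pi> by (rule block_perm_permutes)
  obtain \<sigma> where s: "\<sigma> permutes {..<d}" and blocks: "\<And>x. x < m*d \<Longrightarrow> \<pi> x div m = \<sigma> (x div m)"
    using block_perm_induced_perm[OF m \<pi>] by blast
  have kj: "\<pi> (j*m + a) div m = \<sigma> j" if "j < d" "a < m" for j a
    using blocks block_index_less[OF that] that by simp
  text \<open>w i records how \<pi> moves positions inside the block it maps onto block i.\<close>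
  define w where "w = (\<lambda>i a. if a < m then \<pi> (iv \<sigma> i * m + a) mod m else a)"
  have "w i permutes {..<m}" if i: "i < d" for i
  proof -
    have "iv \<sigma> i < d" using permutes_in_image[OF permutes_inv[OF s]] i by simp
    then show ?thesis unfolding w_def
      by (intro permutes_positions_in_block[OF m permutes_inj[OF p]]) (rule kj)
  qed
  moreover have "\<pi> (j*m+a) = \<sigma> j * m + w (\<sigma> j) a" if "j < d" "a < m" for j a
  proof -
    have "w (\<sigma> j) a = \<pi> (j*m+a) mod m" using that by (simp add: w_def permutes_inverses[OF s])
    then show ?thesis using kj[OF that] by (metis div_mult_mod_eq)
  qed
  ultimately show ?thesis unfolding wreath_perms_def using p s by blast
qed

lemma wreath_perms_eq:
  assumes m: "0 < m"
  shows "wreath_perms m d = {\<pi>. block_perm m d \<pi>}"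
proof (intro Set.set_eqI iffI)
  fix \<pi> assume "\<pi> \<in> wreath_perms m d"
  then obtain \<sigma> w where p: "\<pi> permutes {..<m*d}" and s: "\<sigma> permutes {..<d}"
    and w: "\<forall>i<d. w i permutes {..<m}" and f: "\<forall>j<d. \<forall>a<m. \<pi> (j*m+a) = \<sigma> j * m + w (\<sigma> j) a"
    unfolding wreath_perms_def by blast
  have "\<pi> x div m = \<sigma> (x div m)" if x: "x < m*d" for x
  proof -
    have j: "\<sigma> (x div m) < d" using permutes_in_image[OF s] block_div_less[OF x] by simp
    have "\<pi> (x div m * m + x mod m) = \<sigma> (x div m) * m + w (\<sigma> (x div m)) (x mod m)"
      using block_div_less[OF x] m by (intro f[rule_format]) simp_all
    then have "\<pi> x = \<sigma> (x div m) * m + w (\<sigma> (x div m)) (x mod m)" by simp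
    moreover have "w (\<sigma> (x div m)) (x mod m) < m" using permutes_in_image w j m by fastforce
    ultimately show ?thesis by simp
  qed
  then show "\<pi> \<in> {\<pi>. block_perm m d \<pi>}" using p unfolding block_perm_def by simp
next
  fix \<pi> assume "\<pi> \<in> {\<pi>. block_perm m d \<pi>}"
  then show "\<pi> \<in> wreath_perms m d" using block_perm_in_wreath_perms[OF m] by simp
qed

lemma W0_perms_eq:
  assumes m: "0 < m"
  shows "W0_perms m d = {\<pi>. \<pi> permutes {..<m*d} \<and> (\<forall>x<m*d. \<pi> x div m = x div m)}"
proof (intro Set.set_eqI iffI)
  fix \<pi> assume "\<pi> \<in> W0_perms m d"
  then obtain w where p: "\<pi> permutes {..<m*d}" and w: "\<forall>i<d. w i permutes {..<m}"
    and f: "\<forall>j<d. \<forall>a<m. \<pi> (j*m+a) = j * m + w j a"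
    unfolding W0_perms_def by blast
  have "\<pi> x div m = x div m" if x: "x < m*d" for x
  proof -
    have "\<pi> (x div m * m + x mod m) = x div m * m + w (x div m) (x mod m)"
      using block_div_less[OF x] m by (intro f[rule_format]) simp_all
    moreover have "w (x div m) (x mod m) < m"
      using permutes_in_image w block_div_less[OF x] m by fastforce
    ultimately show ?thesis by simp
  qed
  then show "\<pi> \<in> {\<pi>. \<pi> permutes {..<m*d} \<and> (\<forall>x<m*d. \<pi> x div m = x div m)}" using p by simp
next
  fix \<pi> assume "\<pi> \<in> {\<pi>. \<pi> permutes {..<m*d} \<and> (\<forall>x<m*d. \<pi> x div m = x div m)}"
  then have p: "\<pi> permutes {..<m*d}" and blocks: "\<forall>x<m*d. \<pi> x div m = x div m" by auto
  define w where "w = (\<lambda>i a. if a < m then \<pi> (i * m + a) mod m else a)"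
  have kj: "\<pi> (j*m + a) div m = j" if "j < d" "a < m" for j a
    using blocks block_index_less[OF that] that by simp
  have "w i permutes {..<m}" if i: "i < d" for i
    unfolding w_def using i by (intro permutes_positions_in_block[OF m permutes_inj[OF p]]) (rule kj)
  moreover have "\<pi> (j*m+a) = j * m + w j a" if "j < d" "a < m" for j a
    using kj[OF that] that by (simp add: w_def) (metis div_mult_mod_eq)
  ultimately show "\<pi> \<in> W0_perms m d" unfolding W0_perms_def using p by blast
qed

lemma Omega_perms_eq:
  assumes m: "0 < m"
  shows "Omega_perms m d = {\<pi>. block_perm m d \<pi> \<and> (\<forall>x<m*d. \<pi> x mod m = x mod m)}"
proof (intro Set.set_eqI iffI)
  fix \<pi> assume "\<pi> \<in> Omega_perms m d"
  then obtain \<sigma> where p: "\<pi> permutes {..<m*d}" and s: "\<sigma> permutes {..<d}"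
    and f: "\<forall>j<d. \<forall>a<m. \<pi> (j*m+a) = \<sigma> j * m + a"
    unfolding Omega_perms_def by blast
  have "\<pi> x div m = \<sigma> (x div m) \<and> \<pi> x mod m = x mod m" if x: "x < m*d" for x
  proof -
    have "\<pi> (x div m * m + x mod m) = \<sigma> (x div m) * m + x mod m"
      using block_div_less[OF x] m by (intro f[rule_format]) simp_all
    then show ?thesis using m by simp
  qed
  then have "block_perm m d \<pi>" and "\<forall>x<m*d. \<pi> x mod m = x mod m"
    using p unfolding block_perm_def by auto
  then show "\<pi> \<in> {\<pi>. block_perm m d \<pi> \<and> (\<forall>x<m*d. \<pi> x mod m = x mod m)}" by simp
next
  fix \<pi> assume "\<pi> \<in> {\<pi>. block_perm m d \<pi> \<and> (\<forall>x<m*d. \<pi> x mod m = x mod m)}"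
  then have \<pi>: "block_perm m d \<pi>" and pos: "\<forall>x<m*d. \<pi> x mod m = x mod m" by auto
  obtain \<sigma> where s: "\<sigma> permutes {..<d}" and blocks: "\<And>x. x < m*d \<Longrightarrow> \<pi> x div m = \<sigma> (x div m)"
    using block_perm_induced_perm[OF m \<pi>] by blast
  have "\<pi> (j*m+a) = \<sigma> j * m + a" if "j < d" "a < m" for j a
  proof -
    have "\<pi> (j*m+a) div m = \<sigma> j" "\<pi> (j*m+a) mod m = a"
      using blocks pos block_index_less[OF that] that by simp_all
    then show ?thesis by (metis div_mult_mod_eq)
  qed
  then show "\<pi> \<in> Omega_perms m d" unfolding Omega_perms_def using block_perm_permutes[OF \<pi>] s by blast
qed

lemma wreath_grp_simps:
  "carrier (wreath_grp m d) = wreath_perms m d" "mult (wreath_grp m d) = (\<circ>)" "one (wreath_grp m d) = id"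
  by (auto simp: wreath_grp_def)

lemma group_wreath_grp:
  assumes m: "0 < m"
  shows "group (wreath_grp m d)"
proof (rule groupI)
  fix x assume "x \<in> carrier (wreath_grp m d)"
  then have x: "block_perm m d x" by (simp add: wreath_grp_simps wreath_perms_eq[OF m])
  then show "\<exists>y\<in>carrier (wreath_grp m d). y \<otimes>\<^bsub>wreath_grp m d\<^esub> x = \<one>\<^bsub>wreath_grp m d\<^esub>"
    using block_perm_inv[OF m x] permutes_inv_o(2)[OF block_perm_permutes[OF x]]
    by (auto simp: wreath_grp_simps wreath_perms_eq[OF m])
qed (auto simp: wreath_grp_simps wreath_perms_eq[OF m] block_perm_comp block_perm_id o_assoc)

lemma wreath_grp_inv:
  assumes m: "0 < m" and x: "x \<in> carrier (wreath_grp m d)"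
  shows "inv\<^bsub>wreath_grp m d\<^esub> x = iv x"
proof (rule group.inv_equality[OF group_wreath_grp[OF m]])
  have "block_perm m d x" using x by (simp add: wreath_grp_simps wreath_perms_eq[OF m])
  then show "iv x \<otimes>\<^bsub>wreath_grp m d\<^esub> x = \<one>\<^bsub>wreath_grp m d\<^esub>" "iv x \<in> carrier (wreath_grp m d)"
    using block_perm_inv[OF m] permutes_inv_o(2)[OF block_perm_permutes]
    by (auto simp: wreath_grp_simps wreath_perms_eq[OF m])
qed (rule x)

lemma W0_perms_subset:
  assumes m: "0 < m"
  shows "W0_perms m d \<subseteq> wreath_perms m d"
proof
  fix \<pi> assume "\<pi> \<in> W0_perms m d"
  then have "\<pi> permutes {..<m*d}" "\<forall>x<m*d. \<pi> x div m = x div m" by (auto simp: W0_perms_eq[OF m])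
  then show "\<pi> \<in> wreath_perms m d" unfolding wreath_perms_eq[OF m] block_perm_def by simp
qed

lemma W0_perms_subgroup:
  assumes m: "0 < m"
  shows "subgroup (W0_perms m d) (wreath_grp m d)"
proof (rule group.subgroupI[OF group_wreath_grp[OF m]])
  show "W0_perms m d \<subseteq> carrier (wreath_grp m d)" using W0_perms_subset[OF m] by (simp add: wreath_grp_simps)
  show "W0_perms m d \<noteq> {}" using m by (auto simp: W0_perms_eq intro!: exI[of _ id])
next
  fix a assume a: "a \<in> W0_perms m d"
  then have p: "a permutes {..<m*d}" and blocks: "\<forall>x<m*d. a x div m = x div m"
    by (auto simp: W0_perms_eq[OF m])
  have "iv a x div m = x div m" if "x < m*d" for x
  proof -
    have "iv a x < m*d" using permutes_in_image[OF permutes_inv[OF p]] that by simp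
    then have "a (iv a x) div m = iv a x div m" using blocks by blast
    then show ?thesis by (simp add: permutes_inverses[OF p])
  qed
  moreover have "inv\<^bsub>wreath_grp m d\<^esub> a = iv a"
    using wreath_grp_inv[OF m] a W0_perms_subset[OF m] by (auto simp: wreath_grp_simps)
  ultimately show "inv\<^bsub>wreath_grp m d\<^esub> a \<in> W0_perms m d"
    using permutes_inv[OF p] by (simp add: W0_perms_eq[OF m])
next
  fix a b assume "a \<in> W0_perms m d" "b \<in> W0_perms m d"
  then have p: "a permutes {..<m*d}" "b permutes {..<m*d}"
    and blocks: "\<forall>x<m*d. a x div m = x div m" "\<forall>x<m*d. b x div m = x div m"
    by (auto simp: W0_perms_eq[OF m])
  have "(a \<circ> b) x div m = x div m" if "x < m*d" for x
    using blocks permutes_in_image[OF p(2)] that by simp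
  then show "a \<otimes>\<^bsub>wreath_grp m d\<^esub> b \<in> W0_perms m d"
    using permutes_compose[OF p(2,1)] by (simp add: W0_perms_eq[OF m] wreath_grp_simps)
qed

lemma W0_perms_normal:
  assumes m: "0 < m"
  shows "W0_perms m d \<lhd> wreath_grp m d"
proof -
  interpret W: group "wreath_grp m d" by (rule group_wreath_grp[OF m])
  show ?thesis
  proof (subst W.normal_inv_iff, intro conjI ballI)
    fix x h assume x: "x \<in> carrier (wreath_grp m d)" and h: "h \<in> W0_perms m d"
    have bx: "block_perm m d x" using x by (simp add: wreath_grp_simps wreath_perms_eq[OF m])
    note px = block_perm_permutes[OF bx]
    have ph: "h permutes {..<m*d}" and kh: "\<forall>y<m*d. h y div m = y div m"
      using h by (auto simp: W0_perms_eq[OF m])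
    have "(x \<circ> h \<circ> iv x) y div m = y div m" if y: "y < m*d" for y
    proof -
      have z: "iv x y < m*d" using permutes_in_image[OF permutes_inv[OF px]] y by simp
      then have "h (iv x y) < m*d" "h (iv x y) div m = iv x y div m"
        using permutes_in_image[OF ph] kh by auto
      then have "x (h (iv x y)) div m = x (iv x y) div m" using block_perm_div_eq[OF bx _ z] by blast
      then show ?thesis by (simp add: permutes_inverses[OF px])
    qed
    moreover have "x \<circ> h \<circ> iv x permutes {..<m*d}"
      using permutes_compose[OF permutes_compose[OF permutes_inv[OF px] ph] px] by (simp add: o_assoc)
    ultimately show "x \<otimes>\<^bsub>wreath_grp m d\<^esub> h \<otimes>\<^bsub>wreath_grp m d\<^esub> inv\<^bsub>wreath_grp m d\<^esub> x \<in> W0_perms m d"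
      using wreath_grp_inv[OF m x] by (simp add: wreath_grp_simps W0_perms_eq[OF m])
  qed (rule W0_perms_subgroup[OF m])
qed

lemma Omega_perms_subgroup:
  assumes m: "0 < m"
  shows "subgroup (Omega_perms m d) (wreath_grp m d)"
proof (rule group.subgroupI[OF group_wreath_grp[OF m]])
  show "Omega_perms m d \<subseteq> carrier (wreath_grp m d)"
    by (auto simp: Omega_perms_eq[OF m] wreath_grp_simps wreath_perms_eq[OF m])
  show "Omega_perms m d \<noteq> {}" using block_perm_id by (auto simp: Omega_perms_eq[OF m] intro!: exI[of _ id])
next
  fix a assume a: "a \<in> Omega_perms m d"
  then have ba: "block_perm m d a" and pos: "\<forall>x<m*d. a x mod m = x mod m" by (auto simp: Omega_perms_eq[OF m])
  note p = block_perm_permutes[OF ba]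
  have "iv a x mod m = x mod m" if "x < m*d" for x
  proof -
    have "iv a x < m*d" using permutes_in_image[OF permutes_inv[OF p]] that by simp
    then have "a (iv a x) mod m = iv a x mod m" using pos by blast
    then show ?thesis by (simp add: permutes_inverses[OF p])
  qed
  moreover have "a \<in> carrier (wreath_grp m d)" using ba by (simp add: wreath_grp_simps wreath_perms_eq[OF m])
  ultimately show "inv\<^bsub>wreath_grp m d\<^esub> a \<in> Omega_perms m d"
    using wreath_grp_inv[OF m] block_perm_inv[OF m ba] by (simp add: Omega_perms_eq[OF m])
next
  fix a b assume "a \<in> Omega_perms m d" "b \<in> Omega_perms m d"
  then have b: "block_perm m d a" "block_perm m d b"
    and pos: "\<forall>x<m*d. a x mod m = x mod m" "\<forall>x<m*d. b x mod m = x mod m"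
    by (auto simp: Omega_perms_eq[OF m])
  have "(a \<circ> b) x mod m = x mod m" if "x < m*d" for x
    using pos permutes_in_image[OF block_perm_permutes[OF b(2)]] that by simp
  then show "a \<otimes>\<^bsub>wreath_grp m d\<^esub> b \<in> Omega_perms m d"
    using block_perm_comp[OF b] by (simp add: Omega_perms_eq[OF m] wreath_grp_simps)
qed

lemma W0_perms_Int_Omega_perms:
  assumes m: "0 < m"
  shows "W0_perms m d \<inter> Omega_perms m d = {id}"
proof
  show "W0_perms m d \<inter> Omega_perms m d \<subseteq> {id}"
  proof
    fix \<pi> assume "\<pi> \<in> W0_perms m d \<inter> Omega_perms m d"
    then have p: "\<pi> permutes {..<m*d}"
      and fix_block: "\<forall>x<m*d. \<pi> x div m = x div m" and fix_pos: "\<forall>x<m*d. \<pi> x mod m = x mod m"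
      by (auto simp: W0_perms_eq[OF m] Omega_perms_eq[OF m])
    have "\<pi> x = x" for x
    proof (cases "x < m*d")
      case True
      then have "\<pi> x div m = x div m" "\<pi> x mod m = x mod m" using fix_block fix_pos by simp_all
      then show ?thesis by (rule mod_div_eqI)
    qed (simp add: permutes_not_in[OF p])
    then show "\<pi> \<in> {id}" by auto
  qed
  show "{id} \<subseteq> W0_perms m d \<inter> Omega_perms m d"
    using block_perm_id by (auto simp: W0_perms_eq[OF m] Omega_perms_eq[OF m] permutes_id)
qed

definition rigid_block_perm :: "nat \<Rightarrow> nat \<Rightarrow> (nat \<Rightarrow> nat) \<Rightarrow> nat \<Rightarrow> nat" where
  "rigid_block_perm m d \<sigma> = (\<lambda>x. if x < m*d then \<sigma> (x div m) * m + x mod m else x)"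

lemma rigid_block_perm_div:
  "0 < m \<Longrightarrow> x < m*d \<Longrightarrow> rigid_block_perm m d \<sigma> x div m = \<sigma> (x div m)"
  by (simp add: rigid_block_perm_def)

lemma rigid_block_perm_in_Omega_perms:
  assumes m: "0 < m" and s: "\<sigma> permutes {..<d}"
  shows "rigid_block_perm m d \<sigma> \<in> Omega_perms m d"
proof -
  let ?t = "rigid_block_perm m d \<sigma>"
  have t_less: "?t x < m*d" if "x < m*d" for x
  proof -
    have "\<sigma> (x div m) < d" using permutes_in_image[OF s] block_div_less[OF that] by simp
    then show ?thesis using block_index_less[of "\<sigma> (x div m)" d "x mod m" m] m that
      by (simp add: rigid_block_perm_def)
  qed
  have t_mod: "?t x mod m = x mod m" if "x < m*d" for x
    using that m by (simp add: rigid_block_perm_def)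
  have "?t permutes {..<m*d}"
  proof (rule inj_imp_permutes)
    show "inj_on ?t {..<m*d}"
    proof (rule inj_onI)
      fix x y assume xy: "x \<in> {..<m*d}" "y \<in> {..<m*d}" "?t x = ?t y"
      then have "\<sigma> (x div m) = \<sigma> (y div m)" using rigid_block_perm_div[OF m] by (metis lessThan_iff)
      then have "x div m = y div m" by (rule injD[OF permutes_inj[OF s]])
      moreover have "x mod m = y mod m" using xy t_mod by (metis lessThan_iff)
      ultimately show "x = y" by (rule mod_div_eqI)
    qed
  qed (use t_less in \<open>auto simp: rigid_block_perm_def\<close>)
  then have "block_perm m d ?t" unfolding block_perm_def using rigid_block_perm_div[OF m] by simp
  then show ?thesis using t_mod by (simp add: Omega_perms_eq[OF m])
qed

lemma W0_perms_Omega_perms_decomposition: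
  assumes m: "0 < m"
  shows "set_mult (wreath_grp m d) (W0_perms m d) (Omega_perms m d) = carrier (wreath_grp m d)"
proof
  interpret W: group "wreath_grp m d" by (rule group_wreath_grp[OF m])
  show "set_mult (wreath_grp m d) (W0_perms m d) (Omega_perms m d) \<subseteq> carrier (wreath_grp m d)"
    using W0_perms_subset[OF m] subgroup.subset[OF Omega_perms_subgroup[OF m]]
    unfolding set_mult_def by (auto simp: wreath_grp_simps intro!: W.m_closed[simplified wreath_grp_simps])
  show "carrier (wreath_grp m d) \<subseteq> set_mult (wreath_grp m d) (W0_perms m d) (Omega_perms m d)"
  proof
    fix \<pi> assume "\<pi> \<in> carrier (wreath_grp m d)"
    then have \<pi>: "block_perm m d \<pi>" by (simp add: wreath_grp_simps wreath_perms_eq[OF m])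
    obtain \<sigma> where s: "\<sigma> permutes {..<d}" and blocks: "\<And>x. x < m*d \<Longrightarrow> \<pi> x div m = \<sigma> (x div m)"
      using block_perm_induced_perm[OF m \<pi>] by blast
    define t where "t = rigid_block_perm m d \<sigma>"
    have t\<Omega>: "t \<in> Omega_perms m d" unfolding t_def by (rule rigid_block_perm_in_Omega_perms[OF m s])
    then have tp: "t permutes {..<m*d}" by (simp add: Omega_perms_eq[OF m] block_perm_def)
    have "(\<pi> \<circ> iv t) x div m = x div m" if x: "x < m*d" for x
    proof -
      have y: "iv t x < m*d" using permutes_in_image[OF permutes_inv[OF tp]] x by simp
      then have "(\<pi> \<circ> iv t) x div m = t (iv t x) div m"
        using blocks rigid_block_perm_div[OF m] by (simp add: t_def)
      then show ?thesis by (simp add: permutes_inverses[OF tp])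
    qed
    then have "\<pi> \<circ> iv t \<in> W0_perms m d"
      using permutes_compose[OF permutes_inv[OF tp] block_perm_permutes[OF \<pi>]] by (simp add: W0_perms_eq[OF m])
    moreover have "\<pi> = (\<pi> \<circ> iv t) \<otimes>\<^bsub>wreath_grp m d\<^esub> t"
      by (simp add: wreath_grp_simps comp_assoc permutes_inv_o(2)[OF tp])
    ultimately show "\<pi> \<in> set_mult (wreath_grp m d) (W0_perms m d) (Omega_perms m d)"
      unfolding set_mult_def using t\<Omega> by blast
  qed
qed

lemma transpose_in_W0_perms:
  assumes m: "0 < m" and xy: "x < m*d" "y < m*d" "x div m = y div m"
  shows "Transposition.transpose x y \<in> W0_perms m d"
  unfolding W0_perms_eq[OF m] using permutes_swap_id[of x "{..<m*d}" y] xy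
  by (auto simp: transpose_def)

lemma block_div_eq: "b < m \<Longrightarrow> (j*m + b) div m = (j::nat)"
  by simp

lemma simple_refls_subset_W0_perms:
  assumes m: "0 < m"
  shows "simple_refls m d \<subseteq> W0_perms m d"
proof
  fix s assume "s \<in> simple_refls m d"
  then obtain j a where ja: "j < d" "a + 1 < m" and s: "s = Transposition.transpose (j*m+a) (j*m+(a+1))"
    unfolding simple_refls_def by (auto simp: add.assoc)
  have "j*m+a < m*d" "j*m+(a+1) < m*d"
    using block_index_less[OF ja(1), of a m] block_index_less[OF ja(1), of "a+1" m] ja(2) by auto
  moreover have "(j*m+a) div m = (j*m+(a+1)) div m"
    using block_div_eq[of a m j] block_div_eq[of "a+1" m j] ja(2) by (simp only:)
  ultimately show "s \<in> W0_perms m d" unfolding s by (rule transpose_in_W0_perms[OF m])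
qed

lemma simple_refls_involution: "s \<in> simple_refls m d \<Longrightarrow> s \<circ> s = id \<and> s \<noteq> id"
  unfolding simple_refls_def by (auto simp: transpose_eq_id_iff)

text \<open>(a b+1) is the conjugate of (a b) by the simple reflection (b b+1).\<close>
lemma transpose_block_in_generate:
  assumes j: "j < d" and ab: "a < b" "b < m"
  shows "Transposition.transpose (j*m+a) (j*m+b) \<in> generate (wreath_grp m d) (simple_refls m d)"
  using ab
proof (induction b)
  case (Suc b)
  have s: "Transposition.transpose (j*m+b) (j*m+Suc b) \<in> generate (wreath_grp m d) (simple_refls m d)"
    using Suc.prems j by (intro generate.incl) (auto simp: simple_refls_def)
  show ?case
  proof (cases "a = b")
    case False
    then have "Transposition.transpose (j*m+a) (j*m+b) \<in> generate (wreath_grp m d) (simple_refls m d)"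
      using Suc by simp
    then have "Transposition.transpose (j*m+b) (j*m+Suc b) \<circ> Transposition.transpose (j*m+a) (j*m+b)
        \<circ> Transposition.transpose (j*m+b) (j*m+Suc b) \<in> generate (wreath_grp m d) (simple_refls m d)"
      using s generate.eng[of _ "wreath_grp m d"] by (simp add: wreath_grp_simps)
    moreover have "Transposition.transpose (j*m+b) (j*m+Suc b) \<circ> Transposition.transpose (j*m+a) (j*m+b)
        \<circ> Transposition.transpose (j*m+b) (j*m+Suc b) = Transposition.transpose (j*m+a) (j*m+Suc b)"
      using False Suc.prems transpose_comp_triple[of "j*m+Suc b" "j*m+a" "j*m+b"]
      by (simp add: transpose_commute)
    ultimately show ?thesis by simp
  qed (use s in simp)
qed simp

lemma transpose_in_generate_simple_refls:
  assumes m: "0 < m" and xy: "x < m*d" "y < m*d" "x div m = y div m" "x \<noteq> y"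
  shows "Transposition.transpose x y \<in> generate (wreath_grp m d) (simple_refls m d)"
proof -
  have *: "Transposition.transpose x y \<in> generate (wreath_grp m d) (simple_refls m d)"
    if "x < m*d" "x div m = y div m" "x < y" for x y
  proof -
    have "x mod m < y mod m" using that by (metis div_mult_mod_eq nat_add_left_cancel_less)
    then have "Transposition.transpose (x div m * m + x mod m) (x div m * m + y mod m)
        \<in> generate (wreath_grp m d) (simple_refls m d)"
      by (rule transpose_block_in_generate[OF block_div_less[OF that(1)] _ mod_less_divisor[OF m]])
    then show ?thesis using that(2) by (metis div_mult_mod_eq)
  qed
  show ?thesis
  proof (cases "x < y")
    case False
    then show ?thesis using *[of y x] xy by (simp add: transpose_commute)
  qed (use * xy in blast)
qed

lemma fiber_preserving_permutes_induct [consumes 3, case_names id swap]: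
  assumes "\<pi> permutes S" "finite S" "\<And>x. f (\<pi> x) = f x"
    and id: "P id"
    and swap: "\<And>x y p. x \<in> S \<Longrightarrow> y \<in> S \<Longrightarrow> x \<noteq> y \<Longrightarrow> f x = f y \<Longrightarrow> P p
      \<Longrightarrow> P (Transposition.transpose x y \<circ> p)"
  shows "P \<pi>"
  using assms(1-3)
proof (induction "card {x. \<pi> x \<noteq> x}" arbitrary: \<pi> rule: less_induct)
  case less
  show ?case
  proof (cases "\<pi> = id")
    case False
    then obtain x where x: "\<pi> x \<noteq> x" by (auto simp: fun_eq_iff)
    have "x \<in> S" using permutes_not_in[OF less.prems(1)] x by blast
    then have xS: "x \<in> S" "\<pi> x \<in> S" using permutes_in_image[OF less.prems(1)] by auto
    define \<pi>' where "\<pi>' = Transposition.transpose x (\<pi> x) \<circ> \<pi>"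
    have \<pi>'S: "\<pi>' permutes S" unfolding \<pi>'_def using less.prems(1) xS
      by (intro permutes_compose permutes_swap_id)
    have inj_x: "\<pi> y = \<pi> x \<longleftrightarrow> y = x" for y using permutes_inj[OF less.prems(1)] by (simp add: inj_eq)
    have "f (\<pi>' y) = f y" for y
      using less.prems(3)[of y] less.prems(3)[of x] inj_x[of y] by (auto simp: \<pi>'_def transpose_def)
    have sub: "{y. \<pi>' y \<noteq> y} \<subseteq> {y. \<pi> y \<noteq> y} - {x}"
      using inj_x by (auto simp: \<pi>'_def transpose_def)
    have "{y. \<pi> y \<noteq> y} \<subseteq> S" using permutes_not_in[OF less.prems(1)] by blast
    then have fin: "finite {y. \<pi> y \<noteq> y}" using less.prems(2) by (rule finite_subset)
    have "card {y. \<pi>' y \<noteq> y} \<le> card ({y. \<pi> y \<noteq> y} - {x})"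
      using fin sub by (intro card_mono) auto
    also have "\<dots> < card {y. \<pi> y \<noteq> y}" using fin x by (intro card_Diff1_less) auto
    finally have "P \<pi>'" using less.hyps \<pi>'S less.prems(2) \<open>\<And>y. f (\<pi>' y) = f y\<close> by blast
    then have "P (Transposition.transpose x (\<pi> x) \<circ> \<pi>')"
      using x less.prems(3)[of x] by (intro swap[OF xS]) auto
    then show ?thesis by (simp add: \<pi>'_def o_assoc)
  qed (simp add: id)
qed

lemma generate_simple_refls:
  assumes m: "0 < m"
  shows "generate (wreath_grp m d) (simple_refls m d) = W0_perms m d"
proof
  interpret W: group "wreath_grp m d" by (rule group_wreath_grp[OF m])
  show "generate (wreath_grp m d) (simple_refls m d) \<subseteq> W0_perms m d"
    using W.generate_subgroup_incl[OF simple_refls_subset_W0_perms[OF m]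
        W0_perms_subgroup[OF m]] .
  show "W0_perms m d \<subseteq> generate (wreath_grp m d) (simple_refls m d)"
  proof
    fix \<pi> assume "\<pi> \<in> W0_perms m d"
    then have p: "\<pi> permutes {..<m*d}" and blocks: "\<forall>x<m*d. \<pi> x div m = x div m"
      by (auto simp: W0_perms_eq[OF m])
    have "\<pi> x div m = x div m" for x
      using blocks permutes_not_in[OF p] by (cases "x < m*d") auto
    with p finite_lessThan show "\<pi> \<in> generate (wreath_grp m d) (simple_refls m d)"
    proof (induction rule: fiber_preserving_permutes_induct)
      case id
      then show ?case using generate.one[of "wreath_grp m d"] by (simp add: wreath_grp_simps id_def)
    next
      case (swap x y p)
      then have "Transposition.transpose x y \<in> generate (wreath_grp m d) (simple_refls m d)"
        by (intro transpose_in_generate_simple_refls[OF m]) auto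
      from generate.eng[OF this swap.IH] show ?case by (simp add: wreath_grp_simps comp_def)
    qed
  qed
qed

section \<open>The groups B, T and N\<close>

definition block_upper :: "nat \<Rightarrow> nat \<Rightarrow> nat \<Rightarrow> bool" where
  "block_upper m i k \<longleftrightarrow> i div m = k div m \<and> i \<le> k"

lemma B_md_eq:
  "B_md m d = {A \<in> carrier_mat (m*d) (m*d). invertible_mat A \<and> mat_support_in (block_upper m) (m*d) A}"
  unfolding B_md_def mat_support_in_def block_upper_def by auto

lemma subgroup_B_md: "subgroup (B_md m d) (GL_grp (m*d) :: 'a::field mat monoid)"
  unfolding B_md_eq by (rule subgroup_mat_support_in) (auto simp: block_upper_def)

lemma one_in_B_md: "(1\<^sub>m (m*d) :: 'a::field mat) \<in> B_md m d"
  using subgroup.one_closed[OF subgroup_B_md] by (simp add: GL_grp_simps)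

lemma mult_in_B_md: "A \<in> B_md m d \<Longrightarrow> B \<in> B_md m d \<Longrightarrow> (A * B :: 'a::field mat) \<in> B_md m d"
  using subgroup.m_closed[OF subgroup_B_md] by (simp add: GL_grp_simps)

lemma T_md_eq: "T_md m d = {A :: 'a::field mat. monomial_mat (m*d) id A}"
proof (intro Set.set_eqI iffI)
  fix A :: "'a mat" assume "A \<in> T_md m d"
  then have A: "A \<in> carrier_mat (m*d) (m*d)" "invertible_mat A" "diagonal_mat A"
    by (auto simp: T_md_def)
  then have "upper_triangular A" by (auto simp: upper_triangular_def diagonal_mat_def)
  then have "A $$ (l,l) \<noteq> 0" if "l < m*d" for l using invertible_upper_triangular_diag A(1,2) that by blast
  then show "A \<in> {A. monomial_mat (m*d) id A}" using A by (auto simp: monomial_mat_def diagonal_mat_def)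
next
  fix A :: "'a mat" assume "A \<in> {A. monomial_mat (m*d) id A}"
  then have "monomial_mat (m*d) id A" by simp
  then have "invertible_mat A" "A \<in> carrier_mat (m*d) (m*d)"
    and "\<forall>i<m*d. \<forall>k<m*d. A $$ (i,k) \<noteq> 0 \<longleftrightarrow> i = k"
    using invertible_monomial_mat[OF permutes_id] by (auto simp: monomial_mat_def)
  then show "A \<in> T_md m d" unfolding T_md_def diagonal_mat_def by auto
qed

lemma N_md_eq:
  assumes m: "0 < m"
  shows "N_md m d = {A :: 'a::field mat. \<exists>\<pi>. block_perm m d \<pi> \<and> monomial_mat (m*d) \<pi> A}"
proof (intro Set.set_eqI iffI)
  fix A :: "'a mat" assume "A \<in> N_md m d"
  then obtain \<pi> D where A: "A = perm_matrix (m*d) \<pi> * D" and \<pi>: "block_perm m d \<pi>" and D: "D \<in> T_md m d"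
    unfolding N_md_def wreath_perms_eq[OF m] by blast
  note p = block_perm_permutes[OF \<pi>]
  have "monomial_mat (m*d) (\<pi> \<circ> id) A"
    unfolding A using D by (intro monomial_mat_mult[OF p permutes_id monomial_mat_perm_matrix[OF p]]) (simp add: T_md_eq)
  then show "A \<in> {A. \<exists>\<pi>. block_perm m d \<pi> \<and> monomial_mat (m*d) \<pi> A}" using \<pi> by auto
next
  fix A :: "'a mat" assume "A \<in> {A. \<exists>\<pi>. block_perm m d \<pi> \<and> monomial_mat (m*d) \<pi> A}"
  then obtain \<pi> where \<pi>: "block_perm m d \<pi>" and A: "monomial_mat (m*d) \<pi> A" by blast
  note p = block_perm_permutes[OF \<pi>]
  have "A $$ (\<pi> k, k) \<noteq> 0" if "k < m*d" for k
    using A that permutes_in_image[OF p] by (simp add: monomial_mat_def)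
  then have "mat_diag (m*d) (\<lambda>k. A $$ (\<pi> k, k)) \<in> T_md m d"
    by (simp add: T_md_eq monomial_mat_diag_iff)
  then show "A \<in> N_md m d"
    using monomial_mat_eq_perm_matrix_mult_diag[OF p A] \<pi>
    unfolding N_md_def wreath_perms_eq[OF m] by blast
qed

lemma subgroup_N_md:
  assumes m: "0 < m"
  shows "subgroup (N_md m d) (GL_grp (m*d) :: 'a::field mat monoid)"
proof (rule group.subgroupI[OF group_GL_grp])
  show "N_md m d \<subseteq> carrier (GL_grp (m*d) :: 'a mat monoid)"
  proof
    fix A :: "'a mat" assume "A \<in> N_md m d"
    then obtain \<pi> where \<pi>: "block_perm m d \<pi>" and A: "monomial_mat (m*d) \<pi> A" by (auto simp: N_md_eq[OF m])
    then have "invertible_mat A" using invertible_monomial_mat block_perm_permutes by blast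
    then show "A \<in> carrier (GL_grp (m*d))" using A by (simp add: GL_grp_simps monomial_mat_def)
  qed
  have "perm_matrix (m*d) id \<in> N_md m d"
    using monomial_mat_perm_matrix[OF permutes_id] block_perm_id by (auto simp: N_md_eq[OF m])
  then show "N_md m d \<noteq> {}" by blast
next
  fix A :: "'a mat" assume "A \<in> N_md m d"
  then obtain \<pi> where \<pi>: "block_perm m d \<pi>" and A: "monomial_mat (m*d) \<pi> A" by (auto simp: N_md_eq[OF m])
  note p = block_perm_permutes[OF \<pi>]
  obtain Y where Y: "monomial_mat (m*d) (iv \<pi>) Y" "Y * A = 1\<^sub>m (m*d)"
    using monomial_mat_inverse[OF p A] by blast
  have AG: "A \<in> carrier (GL_grp (m*d))"
    using invertible_monomial_mat[OF p A] A by (auto simp: GL_grp_simps monomial_mat_def)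
  have YG: "Y \<in> carrier (GL_grp (m*d))"
    using invertible_monomial_mat[OF permutes_inv[OF p] Y(1)] Y(1) by (auto simp: GL_grp_simps monomial_mat_def)
  have "inv\<^bsub>GL_grp (m*d)\<^esub> A = Y"
    using Y(2) AG YG by (intro group.inv_equality[OF group_GL_grp]) (auto simp: GL_grp_simps)
  then show "inv\<^bsub>GL_grp (m*d)\<^esub> A \<in> N_md m d"
    using Y(1) block_perm_inv[OF m \<pi>] by (auto simp: N_md_eq[OF m])
next
  fix A B :: "'a mat" assume "A \<in> N_md m d" "B \<in> N_md m d"
  then obtain \<pi> \<rho> where \<pi>: "block_perm m d \<pi>" "block_perm m d \<rho>"
    and AB: "monomial_mat (m*d) \<pi> A" "monomial_mat (m*d) \<rho> B"
    by (auto simp: N_md_eq[OF m])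
  then have "monomial_mat (m*d) (\<pi> \<circ> \<rho>) (A * B)"
    using monomial_mat_mult[OF block_perm_permutes[OF \<pi>(1)] block_perm_permutes[OF \<pi>(2)]] by blast
  then show "A \<otimes>\<^bsub>GL_grp (m*d)\<^esub> B \<in> N_md m d"
    using block_perm_comp[OF \<pi>] by (auto simp: N_md_eq[OF m] GL_grp_simps)
qed

lemma permutes_decreasing_eq_id:
  fixes \<pi> :: "nat \<Rightarrow> nat"
  assumes p: "\<pi> permutes {..<n}" and le: "\<And>k. k < n \<Longrightarrow> \<pi> k \<le> k"
  shows "\<pi> = id"
proof -
  have "\<pi> k = k" if "k < n" for k
    using that
  proof (induction k rule: less_induct)
    case (less k)
    show ?case
    proof (rule ccontr)
      assume "\<pi> k \<noteq> k"
      then have lt: "\<pi> k < k" using le[OF less.prems] by simp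
      then have "\<pi> (\<pi> k) = \<pi> k" using less.IH less.prems by simp
      then show False using injD[OF permutes_inj[OF p]] lt by fastforce
    qed
  qed
  then show ?thesis using permutes_not_in[OF p] by (auto simp: fun_eq_iff)
qed

lemma B_md_Int_N_md:
  assumes m: "0 < m"
  shows "(B_md m d :: 'a::field mat set) \<inter> N_md m d = T_md m d"
proof
  show "B_md m d \<inter> N_md m d \<subseteq> (T_md m d :: 'a mat set)"
  proof
    fix A :: "'a mat" assume "A \<in> B_md m d \<inter> N_md m d"
    then obtain \<pi> where \<pi>: "block_perm m d \<pi>" and A: "monomial_mat (m*d) \<pi> A" and AB: "A \<in> B_md m d"
      by (auto simp: N_md_eq[OF m])
    note p = block_perm_permutes[OF \<pi>]
    have "\<pi> k \<le> k" if k: "k < m*d" for k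
    proof -
      have "\<pi> k < m*d" using permutes_in_image[OF p] k by simp
      moreover have "A $$ (\<pi> k, k) \<noteq> 0" using A k calculation unfolding monomial_mat_def by blast
      ultimately show ?thesis using AB k unfolding B_md_def by blast
    qed
    then have "\<pi> = id" by (rule permutes_decreasing_eq_id[OF p])
    then show "A \<in> T_md m d" using A by (simp add: T_md_eq)
  qed
  show "T_md m d \<subseteq> (B_md m d :: 'a mat set) \<inter> N_md m d"
  proof
    fix A :: "'a mat" assume A: "A \<in> T_md m d"
    then have "monomial_mat (m*d) id A" by (simp add: T_md_eq)
    then have "A \<in> N_md m d" using block_perm_id by (auto simp: N_md_eq[OF m])
    moreover have "i = j" if "i < m*d" "j < m*d" "A $$ (i,j) \<noteq> 0" for i j
      using A that unfolding T_md_def diagonal_mat_def by fastforce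
    then have "A \<in> B_md m d" using A unfolding B_md_def T_md_def by auto
    ultimately show "A \<in> B_md m d \<inter> N_md m d" by simp
  qed
qed

lemma N_grp_simps:
  "carrier (N_grp m d) = N_md m d" "mult (N_grp m d) = (*)" "one (N_grp m d) = 1\<^sub>m (m*d)"
  by (auto simp: N_grp_def GL_grp_def)

lemma group_N_grp: "0 < m \<Longrightarrow> group (N_grp m d :: 'a::field mat monoid)"
  unfolding N_grp_def by (rule subgroup.subgroup_is_group[OF subgroup_N_md group_GL_grp])

lemma mat_perm_N_md:
  assumes m: "0 < m" and A: "(A :: 'a::field mat) \<in> N_md m d"
  shows "block_perm m d (mat_perm (m*d) A)" "monomial_mat (m*d) (mat_perm (m*d) A) A"
proof -
  obtain \<pi> where \<pi>: "block_perm m d \<pi>" and A: "monomial_mat (m*d) \<pi> A"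
    using A by (auto simp: N_md_eq[OF m])
  moreover have "mat_perm (m*d) A = \<pi>" by (rule mat_perm_monomial_mat[OF block_perm_permutes[OF \<pi>] A])
  ultimately show "block_perm m d (mat_perm (m*d) A)" "monomial_mat (m*d) (mat_perm (m*d) A) A" by simp_all
qed

lemma mat_perm_hom:
  assumes m: "0 < m"
  shows "mat_perm (m*d) \<in> hom (N_grp m d :: 'a::field mat monoid) (wreath_grp m d)"
proof (rule homI)
  fix A :: "'a mat" assume "A \<in> carrier (N_grp m d)"
  then show "mat_perm (m*d) A \<in> carrier (wreath_grp m d)"
    using mat_perm_N_md[OF m] by (simp add: N_grp_simps wreath_grp_simps wreath_perms_eq[OF m])
next
  fix A B :: "'a mat" assume "A \<in> carrier (N_grp m d)" "B \<in> carrier (N_grp m d)"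
  then have A: "block_perm m d (mat_perm (m*d) A)" "monomial_mat (m*d) (mat_perm (m*d) A) A"
    and B: "block_perm m d (mat_perm (m*d) B)" "monomial_mat (m*d) (mat_perm (m*d) B) B"
    using mat_perm_N_md[OF m] by (auto simp: N_grp_simps)
  have "monomial_mat (m*d) (mat_perm (m*d) A \<circ> mat_perm (m*d) B) (A * B)"
    using monomial_mat_mult[OF block_perm_permutes[OF A(1)] block_perm_permutes[OF B(1)] A(2) B(2)] .
  then have "mat_perm (m*d) (A * B) = mat_perm (m*d) A \<circ> mat_perm (m*d) B"
    using mat_perm_monomial_mat block_perm_permutes[OF block_perm_comp[OF A(1) B(1)]] by blast
  then show "mat_perm (m*d) (A \<otimes>\<^bsub>N_grp m d\<^esub> B) = mat_perm (m*d) A \<otimes>\<^bsub>wreath_grp m d\<^esub> mat_perm (m*d) B"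
    by (simp add: N_grp_simps wreath_grp_simps)
qed

lemma group_hom_mat_perm:
  "0 < m \<Longrightarrow> group_hom (N_grp m d :: 'a::field mat monoid) (wreath_grp m d) (mat_perm (m*d))"
  unfolding group_hom_def group_hom_axioms_def
  using group_N_grp group_wreath_grp mat_perm_hom by blast

lemma perm_matrix_in_N_md:
  assumes m: "0 < m" and \<pi>: "\<pi> \<in> carrier (wreath_grp m d)"
  shows "(perm_matrix (m*d) \<pi> :: 'a::field mat) \<in> N_md m d"
    and "mat_perm (m*d) (perm_matrix (m*d) \<pi> :: 'a mat) = \<pi>"
proof -
  have b: "block_perm m d \<pi>" using \<pi> by (simp add: wreath_grp_simps wreath_perms_eq[OF m])
  note p = block_perm_permutes[OF b]
  show "(perm_matrix (m*d) \<pi> :: 'a mat) \<in> N_md m d"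
    using monomial_mat_perm_matrix[OF p] b by (auto simp: N_md_eq[OF m])
  show "mat_perm (m*d) (perm_matrix (m*d) \<pi> :: 'a mat) = \<pi>"
    by (rule mat_perm_monomial_mat[OF p monomial_mat_perm_matrix[OF p]])
qed

lemma mat_perm_image:
  assumes m: "0 < m"
  shows "mat_perm (m*d) ` (N_md m d :: 'a::field mat set) = carrier (wreath_grp m d)"
proof
  show "mat_perm (m*d) ` (N_md m d :: 'a mat set) \<subseteq> carrier (wreath_grp m d)"
    using mat_perm_N_md[OF m] by (auto simp: wreath_grp_simps wreath_perms_eq[OF m])
  show "carrier (wreath_grp m d) \<subseteq> mat_perm (m*d) ` (N_md m d :: 'a mat set)"
    using perm_matrix_in_N_md[OF m] by (metis image_eqI subsetI)
qed

lemma mat_perm_kernel: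
  assumes m: "0 < m"
  shows "kernel (N_grp m d :: 'a::field mat monoid) (wreath_grp m d) (mat_perm (m*d)) = T_md m d"
proof
  show "kernel (N_grp m d :: 'a mat monoid) (wreath_grp m d) (mat_perm (m*d)) \<subseteq> T_md m d"
  proof
    fix A :: "'a mat" assume "A \<in> kernel (N_grp m d) (wreath_grp m d) (mat_perm (m*d))"
    then have "A \<in> N_md m d" "mat_perm (m*d) A = id" by (auto simp: kernel_def N_grp_simps wreath_grp_simps)
    then show "A \<in> T_md m d" using mat_perm_N_md(2)[OF m] by (fastforce simp: T_md_eq)
  qed
  show "T_md m d \<subseteq> kernel (N_grp m d :: 'a mat monoid) (wreath_grp m d) (mat_perm (m*d))"
  proof
    fix A :: "'a mat" assume "A \<in> T_md m d"
    then have A: "monomial_mat (m*d) id A" by (simp add: T_md_eq)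
    then have "A \<in> N_md m d" using block_perm_id by (auto simp: N_md_eq[OF m])
    moreover have "mat_perm (m*d) A = id" by (rule mat_perm_monomial_mat[OF permutes_id A])
    ultimately show "A \<in> kernel (N_grp m d) (wreath_grp m d) (mat_perm (m*d))"
      by (simp add: kernel_def N_grp_simps wreath_grp_simps)
  qed
qed

section \<open>The normalizing subgroup \<Omega>\<close>

lemma Omega_perms_inv:
  assumes m: "0 < m" and t: "t \<in> Omega_perms m d"
  shows "iv t \<in> Omega_perms m d"
proof -
  have "t \<in> carrier (wreath_grp m d)" using subgroup.subset[OF Omega_perms_subgroup[OF m]] t by blast
  then show ?thesis using subgroup.m_inv_closed[OF Omega_perms_subgroup[OF m] t] wreath_grp_inv[OF m] by simp
qed

lemma perm_matrix_conj_in_B_md: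
  assumes m: "0 < m" and t: "t \<in> Omega_perms m d" and b: "b \<in> (B_md m d :: 'a::field mat set)"
  shows "perm_matrix (m*d) t * b * perm_matrix (m*d) (iv t) \<in> B_md m d"
proof -
  have bt: "block_perm m d t" and pos: "\<forall>x<m*d. t x mod m = x mod m" using t by (auto simp: Omega_perms_eq[OF m])
  note tp = block_perm_permutes[OF bt]
  have bc: "b \<in> carrier_mat (m*d) (m*d)" "invertible_mat b" "mat_support_in (block_upper m) (m*d) b"
    using b by (auto simp: B_md_eq)
  have "mat_support_in (block_upper m) (m*d) (perm_matrix (m*d) t * b * perm_matrix (m*d) (iv t))"
    unfolding mat_support_in_def
  proof (intro allI impI)
    fix i k assume ik: "i < m*d" "k < m*d" and "(perm_matrix (m*d) t * b * perm_matrix (m*d) (iv t)) $$ (i,k) \<noteq> 0"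
    then have "b $$ (iv t i, iv t k) \<noteq> 0" using index_perm_matrix_conj[OF tp bc(1) ik] by simp
    moreover have u: "iv t i < m*d" "iv t k < m*d" using permutes_in_image[OF permutes_inv[OF tp]] ik by auto
    ultimately have R: "iv t i div m = iv t k div m" "iv t i \<le> iv t k"
      using bc(3) unfolding mat_support_in_def block_upper_def by auto
    have d: "i div m = k div m"
      using block_perm_div_eq[OF bt u R(1)] by (simp add: permutes_inverses[OF tp])
    have "iv t i mod m \<le> iv t k mod m" using R by (metis div_mult_mod_eq nat_add_left_cancel_le)
    moreover have "t (iv t i) mod m = iv t i mod m" "t (iv t k) mod m = iv t k mod m" using pos u by blast+
    ultimately have "i mod m \<le> k mod m" by (simp add: permutes_inverses[OF tp])
    then have "i \<le> k" using d by (metis div_mult_mod_eq nat_add_left_cancel_le)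
    then show "block_upper m i k" using d by (simp add: block_upper_def)
  qed
  moreover have "invertible_mat (perm_matrix (m*d) t * b)"
    by (rule invertible_mat_mult[OF perm_matrix_carrier bc(1) invertible_perm_matrix[OF tp] bc(2)])
  then have "invertible_mat (perm_matrix (m*d) t * b * perm_matrix (m*d) (iv t))"
    by (rule invertible_mat_mult[OF mult_carrier_mat[OF perm_matrix_carrier bc(1)] perm_matrix_carrier _
          invertible_perm_matrix[OF permutes_inv[OF tp]]])
  moreover have "perm_matrix (m*d) t * b * perm_matrix (m*d) (iv t) \<in> carrier_mat (m*d) (m*d)"
    using bc(1) by (intro mult_carrier_mat[of _ _ "m*d"]) auto
  ultimately show ?thesis by (simp add: B_md_eq)
qed

lemma Omega_perms_normalizes_B_md:
  assumes m: "0 < m" and t: "t \<in> Omega_perms m d"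
  shows "triple_prod {perm_matrix (m*d) t} (B_md m d :: 'a::field mat set) {perm_matrix (m*d) (iv t)} = B_md m d"
proof
  show "triple_prod {perm_matrix (m*d) t} (B_md m d :: 'a mat set) {perm_matrix (m*d) (iv t)} \<subseteq> B_md m d"
    unfolding triple_prod_def using perm_matrix_conj_in_B_md[OF m t] by blast
  show "B_md m d \<subseteq> triple_prod {perm_matrix (m*d) t} (B_md m d :: 'a mat set) {perm_matrix (m*d) (iv t)}"
  proof
    fix b :: "'a mat" assume b: "b \<in> B_md m d"
    have tp: "t permutes {..<m*d}" using t by (auto simp: Omega_perms_eq[OF m] block_perm_def)
    define c where "c = perm_matrix (m*d) (iv t) * b * perm_matrix (m*d) (iv (iv t))"
    have cB: "c \<in> B_md m d" unfolding c_def using perm_matrix_conj_in_B_md[OF m Omega_perms_inv[OF m t] b] .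
    have bc: "b \<in> carrier_mat (m*d) (m*d)" and cc: "c \<in> carrier_mat (m*d) (m*d)"
      using b cB by (auto simp: B_md_eq)
    have "perm_matrix (m*d) t * c * perm_matrix (m*d) (iv t) = b"
    proof (rule eq_matI)
      fix i k assume "i < dim_row b" "k < dim_col b"
      then have ik: "i < m*d" "k < m*d" using bc by auto
      then have "iv t i < m*d" "iv t k < m*d" using permutes_in_image[OF permutes_inv[OF tp]] by auto
      then show "(perm_matrix (m*d) t * c * perm_matrix (m*d) (iv t)) $$ (i,k) = b $$ (i,k)"
        using index_perm_matrix_conj[OF tp cc ik] index_perm_matrix_conj[OF permutes_inv[OF tp] bc]
        by (simp add: c_def permutes_inv_inv[OF tp] permutes_inverses[OF tp])
    qed (use bc in \<open>auto simp: perm_matrix_def\<close>)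
    then show "b \<in> triple_prod {perm_matrix (m*d) t} (B_md m d) {perm_matrix (m*d) (iv t)}"
      unfolding triple_prod_def using cB by blast
  qed
qed

lemma transpose_conj:
  assumes "t permutes S"
  shows "t \<circ> Transposition.transpose u v \<circ> iv t = Transposition.transpose (t u) (t v)"
proof
  fix x
  show "(t \<circ> Transposition.transpose u v \<circ> iv t) x = Transposition.transpose (t u) (t v) x"
    by (cases "x = t u"; cases "x = t v")
      (auto simp: transpose_def permutes_inverses[OF assms] permutes_inv_eq[OF assms])
qed

lemma Omega_perms_conj_simple_refls_subset:
  assumes m: "0 < m" and t: "t \<in> Omega_perms m d"
  shows "(\<lambda>s. t \<circ> s \<circ> iv t) ` simple_refls m d \<subseteq> simple_refls m d"
proof
  fix x assume "x \<in> (\<lambda>s. t \<circ> s \<circ> iv t) ` simple_refls m d"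
  then obtain j a where ja: "j < d" "a + 1 < m"
    and x: "x = t \<circ> Transposition.transpose (j*m+a) (j*m+(a+1)) \<circ> iv t"
    unfolding simple_refls_def by (auto simp: add.assoc)
  obtain \<sigma> where \<sigma>: "\<sigma> permutes {..<d}" and f: "\<forall>j<d. \<forall>a<m. t (j*m+a) = \<sigma> j * m + a"
    using t unfolding Omega_perms_def by blast
  have "t permutes {..<m*d}" using t unfolding Omega_perms_def by blast
  moreover have "t (j*m+a) = \<sigma> j * m + a" "t (j*m+(a+1)) = \<sigma> j * m + (a+1)"
    using f[rule_format, of j a] f[rule_format, of j "a+1"] ja by simp_all
  ultimately have "x = Transposition.transpose (\<sigma> j * m + a) (\<sigma> j * m + (a+1))"
    unfolding x by (simp only: transpose_conj)
  moreover have "\<sigma> j < d" using permutes_in_image[OF \<sigma>] ja by simp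
  ultimately show "x \<in> simple_refls m d" unfolding simple_refls_def using ja by (auto simp: add.assoc)
qed

lemma Omega_perms_conj_simple_refls:
  assumes m: "0 < m" and t: "t \<in> Omega_perms m d"
  shows "(\<lambda>s. t \<circ> s \<circ> iv t) ` simple_refls m d = simple_refls m d"
proof
  show "(\<lambda>s. t \<circ> s \<circ> iv t) ` simple_refls m d \<subseteq> simple_refls m d"
    by (rule Omega_perms_conj_simple_refls_subset[OF m t])
  show "simple_refls m d \<subseteq> (\<lambda>s. t \<circ> s \<circ> iv t) ` simple_refls m d"
  proof
    fix s assume s: "s \<in> simple_refls m d"
    have tp: "t permutes {..<m*d}" using t by (auto simp: Omega_perms_eq[OF m] block_perm_def)
    have "iv t \<circ> s \<circ> iv (iv t) \<in> simple_refls m d"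
      using Omega_perms_conj_simple_refls_subset[OF m Omega_perms_inv[OF m t]] s by blast
    moreover have "s = t \<circ> (iv t \<circ> s \<circ> iv (iv t)) \<circ> iv t"
      by (simp add: fun_eq_iff permutes_inv_inv[OF tp] permutes_inverses[OF tp])
    ultimately show "s \<in> (\<lambda>s. t \<circ> s \<circ> iv t) ` simple_refls m d" by blast
  qed
qed

lemma B_md_mult_perm_matrix_neq:
  assumes m: "0 < m" and t: "t \<in> Omega_perms m d" and nt: "t \<noteq> id"
  shows "set_prod (B_md m d :: 'a::field mat set) {perm_matrix (m*d) t} \<noteq> B_md m d"
proof
  assume eq: "set_prod (B_md m d :: 'a mat set) {perm_matrix (m*d) t} = B_md m d"
  have tp: "t permutes {..<m*d}" using t by (auto simp: Omega_perms_eq[OF m] block_perm_def)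
  have "1\<^sub>m (m*d) * perm_matrix (m*d) t \<in> (B_md m d :: 'a mat set)"
    using eq one_in_B_md unfolding set_prod_def by blast
  then have PB: "(perm_matrix (m*d) t :: 'a mat) \<in> B_md m d" by (metis left_mult_one_mat perm_matrix_carrier)
  have "t k \<le> k" if k: "k < m*d" for k
  proof -
    have "t k < m*d" using permutes_in_image[OF tp] k by simp
    then show ?thesis using PB k unfolding B_md_def by fastforce
  qed
  then show False using permutes_decreasing_eq_id[OF tp] nt by blast
qed

section \<open>The Tits axioms\<close>

lemma addrow_mat_zero: "addrow_mat n 0 k l = (1\<^sub>m n :: 'a::field mat)"
  by (rule eq_matI) auto

lemma addrow_mat_in_B_md:
  assumes "k < m*d" "l < m*d" "k < l" "k div m = l div m"
  shows "(addrow_mat (m*d) c k l :: 'a::field mat) \<in> B_md m d"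
proof -
  have "addrow_mat (m*d) c k l * addrow_mat (m*d) (- c) k l = (1\<^sub>m (m*d) :: 'a mat)"
    using assms by (intro addrow_mat_inv) auto
  then have "invertible_mat (addrow_mat (m*d) c k l :: 'a mat)"
    by (rule invertible_mat_right_inverse[OF addrow_mat_carrier addrow_mat_carrier])
  then show ?thesis using assms by (auto simp: B_md_def)
qed

lemma mat_diag_in_B_md:
  assumes "\<And>i. i < m*d \<Longrightarrow> f i \<noteq> 0"
  shows "(mat_diag (m*d) f :: 'a::field mat) \<in> B_md m d"
proof -
  have "monomial_mat (m*d) id (mat_diag (m*d) f :: 'a mat)" using assms by (simp add: monomial_mat_diag_iff)
  then have "invertible_mat (mat_diag (m*d) f :: 'a mat)" by (rule invertible_monomial_mat[OF permutes_id])
  then show ?thesis by (auto simp: B_md_def mat_diag_def)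
qed

lemma B_md_diag_nonzero:
  assumes b: "b \<in> (B_md m d :: 'a::field mat set)" and i: "i < m*d"
  shows "b $$ (i,i) \<noteq> 0"
proof -
  have "upper_triangular b" unfolding upper_triangular_def
  proof (intro allI impI)
    fix i j assume "i < dim_row b" "j < i"
    then have "i < m*d" "j < m*d" "\<not> i \<le> j" using b by (auto simp: B_md_def)
    then show "b $$ (i,j) = 0" using b unfolding B_md_def by blast
  qed
  then show ?thesis using invertible_upper_triangular_diag b i by (auto simp: B_md_def)
qed

lemma B_md_eq_mult_addrow_mat:
  assumes b: "b \<in> (B_md m d :: 'a::field mat set)"
    and q: "Suc q < m*d" "q div m = Suc q div m"
  obtains b' c where "b' \<in> B_md m d" "b' $$ (q, Suc q) = 0" "b = b' * addrow_mat (m*d) c q (Suc q)"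
proof -
  have bc: "b \<in> carrier_mat (m*d) (m*d)" "invertible_mat b" "mat_support_in (block_upper m) (m*d) b"
    using b by (auto simp: B_md_eq)
  have bqq: "b $$ (q,q) \<noteq> 0" using B_md_diag_nonzero[OF b] q by simp
  define c where "c = b $$ (q, Suc q) / b $$ (q,q)"
  define b' where "b' = b * addrow_mat (m*d) (- c) q (Suc q)"
  have "b' \<in> B_md m d" unfolding b'_def using b q by (intro mult_in_B_md addrow_mat_in_B_md) auto
  moreover have "b' $$ (q, Suc q) = 0"
    using addcol_mat[OF bc(1), of q "- c" "Suc q", symmetric] bc(1) q bqq by (simp add: b'_def c_def)
  moreover have "b' * addrow_mat (m*d) c q (Suc q) = b"
    using addrow_mat_inv[of q "m*d" "Suc q" "- c"] bc(1) q
    by (simp add: b'_def assoc_mult_mat[of _ "m*d" "m*d" _ "m*d" _ "m*d"])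
  ultimately show thesis using that by metis
qed

text \<open>Conjugating by s = (q q+1) only moves the entry (q, q+1) below the diagonal.\<close>
lemma perm_matrix_transpose_conj_in_B_md:
  assumes b: "b \<in> (B_md m d :: 'a::field mat set)" and bq: "b $$ (q, Suc q) = 0"
    and q: "Suc q < m*d" "q div m = Suc q div m"
  shows "perm_matrix (m*d) (Transposition.transpose q (Suc q)) * b
    * perm_matrix (m*d) (Transposition.transpose q (Suc q)) \<in> B_md m d"
    (is "?P * b * ?P \<in> _")
proof -
  let ?s = "Transposition.transpose q (Suc q)"
  have sp: "?s permutes {..<m*d}" using q by (intro permutes_swap_id) auto
  have bc: "b \<in> carrier_mat (m*d) (m*d)" "invertible_mat b" "mat_support_in (block_upper m) (m*d) b"
    using b by (auto simp: B_md_eq)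
  have "mat_support_in (block_upper m) (m*d) (?P * b * ?P)"
    unfolding mat_support_in_def
  proof (intro allI impI)
    fix i k assume ik: "i < m*d" "k < m*d" and "(?P * b * ?P) $$ (i,k) \<noteq> 0"
    then have nz: "b $$ (?s i, ?s k) \<noteq> 0" using index_perm_matrix_conj[OF sp bc(1) ik] by simp
    moreover have "?s i < m*d" "?s k < m*d" using permutes_in_image[OF sp] ik by auto
    ultimately have "block_upper m (?s i) (?s k)" using bc(3) unfolding mat_support_in_def by blast
    moreover have "\<not> (?s i = q \<and> ?s k = Suc q)" using nz bq by auto
    moreover have "?s x div m = x div m" for x using q by (cases "x = q \<or> x = Suc q") auto
    ultimately show "block_upper m i k"
      by (auto simp: block_upper_def transpose_def split: if_splits)
  qed
  moreover have "invertible_mat (?P * b)"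
    by (rule invertible_mat_mult[OF perm_matrix_carrier bc(1) invertible_perm_matrix[OF sp] bc(2)])
  then have "invertible_mat (?P * b * ?P)"
    by (rule invertible_mat_mult[OF mult_carrier_mat[OF perm_matrix_carrier bc(1)] perm_matrix_carrier _
          invertible_perm_matrix[OF sp]])
  moreover have "?P * b * ?P \<in> carrier_mat (m*d) (m*d)"
    using bc(1) by (intro mult_carrier_mat[of _ _ "m*d"]) auto
  ultimately show ?thesis by (simp add: B_md_eq)
qed

lemma perm_matrix_mult_addrow_mat_mult_perm_matrix:
  assumes \<sigma>: "\<sigma> permutes {..<n}" and \<pi>: "\<pi> permutes {..<n}" and kl: "k < n" "l < n"
  shows "perm_matrix n \<sigma> * (addrow_mat n c k l * perm_matrix n \<pi>)
    = (perm_matrix n (\<sigma> \<circ> \<pi>) :: 'a::field mat) * addrow_mat n c (iv \<pi> k) (iv \<pi> l)"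
  by (simp add: addrow_mat_mult_perm_matrix[OF \<pi> kl] perm_matrix_mult[OF \<sigma> \<pi>, symmetric]
      assoc_mult_mat[of _ n n _ n _ n] mult_carrier_mat[of _ n n _ n])

lemma perm_matrix_transpose_mult_addrow_mat_mult_perm_matrix:
  fixes c :: "'a::field"
  assumes pr: "p < n" "r < n" "p \<noteq> r" and c: "c \<noteq> 0" and \<pi>: "\<pi> permutes {..<n}"
  defines "\<delta> \<equiv> \<lambda>x. if x = p then - 1/c else if x = r then c else 1"
  shows "perm_matrix n (Transposition.transpose p r) * (addrow_mat n c p r * perm_matrix n \<pi>)
    = addrow_mat n (1/c) p r * (perm_matrix n \<pi>
      * (mat_diag n (\<delta> \<circ> \<pi>) * addrow_mat n (1/c) (iv \<pi> r) (iv \<pi> p)))"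
proof -
  have "perm_matrix n (Transposition.transpose p r) * (addrow_mat n c p r * perm_matrix n \<pi>)
      = perm_matrix n (Transposition.transpose p r) * addrow_mat n c p r * perm_matrix n \<pi>"
    by (simp add: assoc_mult_mat[of _ n n _ n _ n] mult_carrier_mat[of _ n n _ n])
  also have "\<dots> = addrow_mat n (1/c) p r * (mat_diag n \<delta> * (addrow_mat n (1/c) r p * perm_matrix n \<pi>))"
    by (simp add: perm_matrix_transpose_mult_addrow_mat[OF pr c] \<delta>_def assoc_mult_mat[of _ n n _ n _ n] mult_carrier_mat[of _ n n _ n])
  also have "\<dots> = addrow_mat n (1/c) p r * (mat_diag n \<delta> * perm_matrix n \<pi>
      * addrow_mat n (1/c) (iv \<pi> r) (iv \<pi> p))"
    by (simp add: addrow_mat_mult_perm_matrix[OF \<pi> pr(2,1)] assoc_mult_mat[of _ n n _ n _ n] mult_carrier_mat[of _ n n _ n])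
  finally show ?thesis by (simp add: mat_diag_mult_perm_matrix[OF \<pi>] assoc_mult_mat[of _ n n _ n _ n] mult_carrier_mat[of _ n n _ n])
qed

lemma perm_matrix_transpose_mult_self:
  assumes "p < n" "r < n"
  shows "perm_matrix n (Transposition.transpose p r) * perm_matrix n (Transposition.transpose p r)
    = (1\<^sub>m n :: 'a::field mat)"
proof -
  have "Transposition.transpose p r permutes {..<n}" using assms by (intro permutes_swap_id) auto
  then show ?thesis by (simp add: perm_matrix_mult perm_matrix_id)
qed

lemma perm_matrix_transpose_cancel:
  assumes "p < n" "r < n" "Y \<in> carrier_mat n n"
  shows "perm_matrix n (Transposition.transpose p r) * (perm_matrix n (Transposition.transpose p r) * Y)
    = (Y :: 'a::field mat)"
proof -
  have "perm_matrix n (Transposition.transpose p r) * (perm_matrix n (Transposition.transpose p r) * Y)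
      = perm_matrix n (Transposition.transpose p r) * perm_matrix n (Transposition.transpose p r) * Y"
    using assms(3) by (simp add: assoc_mult_mat[of _ n n _ n _ n] mult_carrier_mat[of _ n n _ n])
  then show ?thesis
    by (simp del: assoc_mult_mat add: perm_matrix_transpose_mult_self[OF assms(1,2)] left_mult_one_mat[OF assms(3)])
qed

lemma perm_matrix_transpose_mult_B_md:
  assumes b: "b \<in> (B_md m d :: 'a::field mat set)" and q: "Suc q < m*d" "q div m = Suc q div m"
  defines "s \<equiv> Transposition.transpose q (Suc q)"
  obtains b2 c where "b2 \<in> B_md m d"
    "perm_matrix (m*d) s * b = b2 * (perm_matrix (m*d) s * addrow_mat (m*d) c q (Suc q))"
proof -
  let ?n = "m*d" and ?P = "perm_matrix (m*d) s :: 'a mat"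
  obtain b' c where b': "b' \<in> B_md m d" "b' $$ (q, Suc q) = 0" and bc: "b = b' * addrow_mat ?n c q (Suc q)"
    using B_md_eq_mult_addrow_mat[OF b q] by blast
  have "?P * b' * ?P \<in> B_md m d" unfolding s_def by (rule perm_matrix_transpose_conj_in_B_md[OF b' q])
  moreover have "b' \<in> carrier_mat ?n ?n" using b' by (simp add: B_md_def)
  then have "?P * b = ?P * b' * ?P * (?P * addrow_mat ?n c q (Suc q))"
    using q by (simp add: bc s_def perm_matrix_transpose_cancel
        assoc_mult_mat[of _ ?n ?n _ ?n _ ?n] mult_carrier_mat[of _ ?n ?n _ ?n])
  ultimately show thesis using that by blast
qed

lemma Tits_axiom_B_md:
  assumes m: "0 < m" and q: "Suc q < m*d" "q div m = Suc q div m"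
    and w: "block_perm m d w" and b: "b \<in> (B_md m d :: 'a::field mat set)"
  defines "s \<equiv> Transposition.transpose q (Suc q)"
  shows "perm_matrix (m*d) s * b * perm_matrix (m*d) w
    \<in> triple_prod (B_md m d) {perm_matrix (m*d) (s \<circ> w)} (B_md m d)
      \<union> triple_prod (B_md m d) {perm_matrix (m*d) w} (B_md m d)"
proof -
  let ?n = "m*d" and ?P = "perm_matrix (m*d) :: (nat \<Rightarrow> nat) \<Rightarrow> 'a mat"
  note wp = block_perm_permutes[OF w]
  have sp: "s permutes {..<?n}" unfolding s_def using q by (intro permutes_swap_id) auto
  obtain b2 c where b2: "b2 \<in> B_md m d"
    and sb: "?P s * b = b2 * (?P s * addrow_mat ?n c q (Suc q))"
    using perm_matrix_transpose_mult_B_md[OF b q] unfolding s_def by blast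
  have b2c: "b2 \<in> carrier_mat ?n ?n" using b2 by (simp add: B_md_def)
  have split: "?P s * b * ?P w = b2 * (?P s * (addrow_mat ?n c q (Suc q) * ?P w))"
    using b2c by (simp add: sb assoc_mult_mat[of _ ?n ?n _ ?n _ ?n] mult_carrier_mat[of _ ?n ?n _ ?n])
  have wq: "iv w q < ?n" "iv w (Suc q) < ?n" "iv w q div m = iv w (Suc q) div m"
    using q block_perm_div_eq[OF block_perm_inv[OF m w], of q "Suc q"]
      permutes_in_image[OF permutes_inv[OF wp]] by auto
  have "iv w q \<noteq> iv w (Suc q)" using permutes_inj[OF permutes_inv[OF wp]] by (metis injD n_not_Suc_n)
  then consider "c = 0 \<or> iv w q < iv w (Suc q)" | "c \<noteq> 0" "iv w (Suc q) < iv w q" by linarith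
  then show ?thesis
  proof cases
    case 1
    let ?X = "addrow_mat ?n c (iv w q) (iv w (Suc q)) :: 'a mat"
    have "?X \<in> B_md m d" using 1 wq one_in_B_md addrow_mat_zero addrow_mat_in_B_md by metis
    moreover have "?P s * b * ?P w = b2 * ?P (s \<circ> w) * ?X"
      unfolding split using q b2c
      by (simp add: perm_matrix_mult_addrow_mat_mult_perm_matrix[OF sp wp]
          assoc_mult_mat[of _ ?n ?n _ ?n _ ?n] mult_carrier_mat[of _ ?n ?n _ ?n])
    ultimately show ?thesis using b2 unfolding triple_prod_def by blast
  next
    case 2
    define \<delta> where "\<delta> = (\<lambda>x. if x = q then - 1/c else if x = Suc q then c else (1::'a))"
    let ?U = "addrow_mat ?n (1/c) q (Suc q) :: 'a mat"
    let ?Z = "mat_diag ?n (\<delta> \<circ> w) * addrow_mat ?n (1/c) (iv w (Suc q)) (iv w q) :: 'a mat"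
    have "b2 * ?U \<in> B_md m d" using b2 q by (intro mult_in_B_md addrow_mat_in_B_md) auto
    moreover have "?Z \<in> B_md m d"
      using 2 wq by (intro mult_in_B_md mat_diag_in_B_md addrow_mat_in_B_md) (auto simp: \<delta>_def)
    moreover have "?P s * b * ?P w = b2 * ?U * ?P w * ?Z"
      unfolding split using q 2 b2c
      by (simp add: s_def \<delta>_def perm_matrix_transpose_mult_addrow_mat_mult_perm_matrix[OF _ _ _ _ wp]
          assoc_mult_mat[of _ ?n ?n _ ?n _ ?n] mult_carrier_mat[of _ ?n ?n _ ?n])
    ultimately show ?thesis unfolding triple_prod_def by blast
  qed
qed

lemma perm_matrix_transpose_B_md_neq:
  assumes q: "Suc q < m*d" "q div m = Suc q div m"
  defines "s \<equiv> Transposition.transpose q (Suc q)"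
  shows "set_prod {perm_matrix (m*d) s} (B_md m d :: 'a::field mat set)
    \<noteq> set_prod (B_md m d) {perm_matrix (m*d) s}"
proof
  let ?n = "m*d" and ?P = "perm_matrix (m*d) s :: 'a mat"
  assume eq: "set_prod {?P} (B_md m d) = set_prod (B_md m d) {?P}"
  have sp: "s permutes {..<?n}" unfolding s_def using q by (intro permutes_swap_id) auto
  define E where "E = (addrow_mat ?n 1 q (Suc q) :: 'a mat)"
  have "E \<in> B_md m d" unfolding E_def using q by (intro addrow_mat_in_B_md) auto
  then obtain b where b: "b \<in> B_md m d" and e: "?P * E = b * ?P"
    using eq unfolding set_prod_def by blast
  have bc: "b \<in> carrier_mat ?n ?n" using b by (simp add: B_md_def)
  have "b = b * (?P * ?P)" using q bc by (simp add: s_def perm_matrix_transpose_mult_self)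
  also have "\<dots> = b * ?P * ?P" using bc by (simp add: assoc_mult_mat[of _ ?n ?n _ ?n _ ?n] mult_carrier_mat[of _ ?n ?n _ ?n])
  also have "\<dots> = ?P * E * ?P" by (simp only: e)
  finally have "b $$ (Suc q, q) = E $$ (s (Suc q), s q)"
    using index_perm_matrix_conj[OF sp _ q(1), of E q] q by (simp add: s_def E_def)
  also have "\<dots> = 1" using q by (simp add: s_def E_def)
  moreover have "q < ?n" "mat_support_in (block_upper m) ?n b" using q b by (simp_all add: B_md_eq)
  ultimately have "block_upper m (Suc q) q" using q(1) unfolding mat_support_in_def by simp
  then show False by (simp add: block_upper_def)
qed

lemma simple_refls_obtain:
  assumes "s \<in> simple_refls m d"
  obtains q where "Suc q < m*d" "q div m = Suc q div m" "s = Transposition.transpose q (Suc q)"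
proof -
  obtain j a where ja: "j < d" "a + 1 < m" and s: "s = Transposition.transpose (j*m+a) (j*m+a+1)"
    using assms unfolding simple_refls_def by blast
  have "Suc (j*m+a) < m*d" using block_index_less[OF ja(1), of "a+1" m] ja(2) by simp
  moreover have "(j*m+a) div m = Suc (j*m+a) div m"
    using block_div_eq[of a m j] block_div_eq[of "Suc a" m j] ja(2) by simp
  ultimately show thesis using that s by simp
qed

lemma Tits_axioms:
  assumes m: "0 < m" and s: "s \<in> simple_refls m d" and w: "w \<in> carrier (wreath_grp m d)"
  shows "triple_prod {perm_matrix (m*d) s} (B_md m d :: 'a::field mat set) {perm_matrix (m*d) w}
      \<subseteq> triple_prod (B_md m d) {perm_matrix (m*d) (s \<circ> w)} (B_md m d)
        \<union> triple_prod (B_md m d) {perm_matrix (m*d) w} (B_md m d)"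
    and "set_prod {perm_matrix (m*d) s} (B_md m d :: 'a mat set) \<noteq> set_prod (B_md m d) {perm_matrix (m*d) s}"
proof -
  obtain q where q: "Suc q < m*d" "q div m = Suc q div m" and s: "s = Transposition.transpose q (Suc q)"
    using simple_refls_obtain[OF s] by blast
  have "block_perm m d w" using w by (simp add: wreath_grp_simps wreath_perms_eq[OF m])
  show "triple_prod {perm_matrix (m*d) s} (B_md m d :: 'a::field mat set) {perm_matrix (m*d) w}
      \<subseteq> triple_prod (B_md m d) {perm_matrix (m*d) (s \<circ> w)} (B_md m d)
        \<union> triple_prod (B_md m d) {perm_matrix (m*d) w} (B_md m d)"
  proof (rule subsetI)
    fix x assume "x \<in> triple_prod {perm_matrix (m*d) s} (B_md m d :: 'a mat set) {perm_matrix (m*d) w}"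
    then obtain b where "b \<in> B_md m d" "x = perm_matrix (m*d) s * b * perm_matrix (m*d) w"
      unfolding triple_prod_def by blast
    then show "x \<in> triple_prod (B_md m d) {perm_matrix (m*d) (s \<circ> w)} (B_md m d)
        \<union> triple_prod (B_md m d) {perm_matrix (m*d) w} (B_md m d)"
      using Tits_axiom_B_md[OF m q \<open>block_perm m d w\<close>] unfolding s by simp
  qed
  show "set_prod {perm_matrix (m*d) s} (B_md m d :: 'a mat set) \<noteq> set_prod (B_md m d) {perm_matrix (m*d) s}"
    unfolding s by (rule perm_matrix_transpose_B_md_neq[OF q])
qed

lemma G_grp_generated:
  assumes m: "0 < m"
  shows "group (G_grp m d :: 'a::field mat monoid)"
    and "carrier (G_grp m d :: 'a mat monoid) = generate (GL_grp (m*d)) (B_md m d \<union> N_md m d)"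
    and "subgroup (B_md m d) (G_grp m d :: 'a mat monoid)"
    and "subgroup (N_md m d) (G_grp m d :: 'a mat monoid)"
proof -
  interpret GL: group "GL_grp (m*d) :: 'a mat monoid" by (rule group_GL_grp)
  have B: "subgroup (B_md m d) (GL_grp (m*d) :: 'a mat monoid)" by (rule subgroup_B_md)
  have N: "subgroup (N_md m d) (GL_grp (m*d) :: 'a mat monoid)" by (rule subgroup_N_md[OF m])
  have gen: "subgroup (generate (GL_grp (m*d)) (B_md m d \<union> N_md m d)) (GL_grp (m*d) :: 'a mat monoid)"
    using subgroup.subset[OF B] subgroup.subset[OF N] by (intro GL.generate_is_subgroup) blast
  have G: "G_grp m d = (GL_grp (m*d) :: 'a mat monoid)\<lparr>carrier := generate (GL_grp (m*d)) (B_md m d \<union> N_md m d)\<rparr>"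
    by (simp add: G_grp_def G_md_def)
  show "group (G_grp m d :: 'a mat monoid)" unfolding G by (rule subgroup.subgroup_is_group[OF gen GL.is_group])
  show "carrier (G_grp m d :: 'a mat monoid) = generate (GL_grp (m*d)) (B_md m d \<union> N_md m d)"
    by (simp add: G)
  have "B_md m d \<subseteq> generate (GL_grp (m*d) :: 'a mat monoid) (B_md m d \<union> N_md m d)"
    by (auto intro: generate.incl)
  then show "subgroup (B_md m d) (G_grp m d :: 'a mat monoid)"
    unfolding G by (rule GL.subgroup_incl[OF B gen])
  have "N_md m d \<subseteq> generate (GL_grp (m*d) :: 'a mat monoid) (B_md m d \<union> N_md m d)"
    by (auto intro: generate.incl)
  then show "subgroup (N_md m d) (G_grp m d :: 'a mat monoid)"
    unfolding G by (rule GL.subgroup_incl[OF N gen])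
qed

lemma N_grp_mod_T_md:
  assumes m: "0 < m"
  shows "T_md m d \<lhd> (N_grp m d :: 'a::field mat monoid)"
    and "(N_grp m d :: 'a mat monoid) Mod T_md m d \<cong> wreath_grp m d"
    and "\<exists>\<phi>. \<phi> \<in> hom (N_grp m d :: 'a mat monoid) (wreath_grp m d) \<and> \<phi> ` N_md m d = carrier (wreath_grp m d)
      \<and> kernel (N_grp m d) (wreath_grp m d) \<phi> = T_md m d
      \<and> (\<forall>\<pi>\<in>carrier (wreath_grp m d). perm_matrix (m*d) \<pi> \<in> N_md m d \<and> \<phi> (perm_matrix (m*d) \<pi>) = \<pi>)"
proof -
  interpret \<phi>: group_hom "N_grp m d :: 'a mat monoid" "wreath_grp m d" "mat_perm (m*d)"
    by (rule group_hom_mat_perm[OF m])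
  have ker: "kernel (N_grp m d :: 'a mat monoid) (wreath_grp m d) (mat_perm (m*d)) = T_md m d"
    by (rule mat_perm_kernel[OF m])
  have img: "mat_perm (m*d) ` (N_md m d :: 'a mat set) = carrier (wreath_grp m d)"
    by (rule mat_perm_image[OF m])
  show "T_md m d \<lhd> (N_grp m d :: 'a mat monoid)" using \<phi>.normal_kernel ker by simp
  show "(N_grp m d :: 'a mat monoid) Mod T_md m d \<cong> wreath_grp m d"
    using \<phi>.FactGroup_iso img ker by (simp add: N_grp_simps)
  show "\<exists>\<phi>. \<phi> \<in> hom (N_grp m d :: 'a mat monoid) (wreath_grp m d) \<and> \<phi> ` N_md m d = carrier (wreath_grp m d)
      \<and> kernel (N_grp m d) (wreath_grp m d) \<phi> = T_md m d
      \<and> (\<forall>\<pi>\<in>carrier (wreath_grp m d). perm_matrix (m*d) \<pi> \<in> N_md m d \<and> \<phi> (perm_matrix (m*d) \<pi>) = \<pi>)"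
    using \<phi>.homh img ker perm_matrix_in_N_md[OF m] by blast
qed

theorem proposition2p6:
  fixes m d :: nat
  assumes "m \<ge> 1" and "d \<ge> 1"
  defines "B \<equiv> (B_md m d :: 'a::field mat set)"
    and "N \<equiv> (N_md m d :: 'a mat set)"
    and "T \<equiv> (T_md m d :: 'a mat set)"
    and "G \<equiv> (G_grp m d :: 'a mat monoid)"
    and "NG \<equiv> (N_grp m d :: 'a mat monoid)"
    and "P \<equiv> (perm_matrix (m*d) :: (nat \<Rightarrow> nat) \<Rightarrow> 'a mat)"
    and "W \<equiv> wreath_grp m d"
    and "W0 \<equiv> W0_perms m d"
    and "\<Omega> \<equiv> Omega_perms m d"
    and "S \<equiv> simple_refls m d"
  shows
    \<comment> \<open>G = <B, N>, with B and N subgroups\<close>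
    "group G \<and> carrier G = generate (GL_grp (m*d)) (B \<union> N) \<and> subgroup B G \<and> subgroup N G
     \<comment> \<open>B \<inter> N = T, normal in N\<close>
     \<and> B \<inter> N = T \<and> T \<lhd> NG
     \<comment> \<open>N/T = Sigma_m wr Sigma_d, via the underlying permutation\<close>
     \<and> group W
     \<and> (\<exists>\<phi>. \<phi> \<in> hom NG W \<and> \<phi> ` N = carrier W \<and> kernel NG W \<phi> = T
            \<and> (\<forall>\<pi>\<in>carrier W. P \<pi> \<in> N \<and> \<phi> (P \<pi>) = \<pi>))
     \<and> NG Mod T \<cong> W
     \<comment> \<open>W = W0 \<rtimes> \<Omega>, W0 generated by the involutions S\<close>
     \<and> W0 \<lhd> W \<and> subgroup \<Omega> W \<and> W0 \<inter> \<Omega> = {id} \<and> set_mult W W0 \<Omega> = carrier W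
     \<and> S \<subseteq> W0 \<and> generate W S = W0 \<and> (\<forall>s\<in>S. s \<circ> s = id \<and> s \<noteq> id)
     \<comment> \<open>\<Omega> normalizes B and S; B t \<noteq> B for t \<noteq> 1\<close>
     \<and> (\<forall>t\<in>\<Omega>. triple_prod {P t} B {P (Hilbert_Choice.inv t)} = B \<and> (\<lambda>s. t \<circ> s \<circ> Hilbert_Choice.inv t) ` S = S)
     \<and> (\<forall>t\<in>\<Omega>. t \<noteq> id \<longrightarrow> set_prod B {P t} \<noteq> B)
     \<comment> \<open>Tits axioms\<close>
     \<and> (\<forall>s\<in>S. \<forall>w\<in>carrier W.
          triple_prod {P s} B {P w} \<subseteq> triple_prod B {P (s \<circ> w)} B \<union> triple_prod B {P w} B
          \<and> set_prod {P s} B \<noteq> set_prod B {P s})"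
proof -
  have m: "0 < m" using assms(1) by simp
  show ?thesis
    unfolding B_def N_def T_def G_def NG_def P_def W_def W0_def \<Omega>_def S_def
    by (intro conjI ballI impI)
      (simp_all add: G_grp_generated[OF m] B_md_Int_N_md[OF m] N_grp_mod_T_md[OF m] group_wreath_grp[OF m]
        W0_perms_normal[OF m] Omega_perms_subgroup[OF m] W0_perms_Int_Omega_perms[OF m]
        W0_perms_Omega_perms_decomposition[OF m] simple_refls_subset_W0_perms[OF m]
        generate_simple_refls[OF m] simple_refls_involution
        Omega_perms_normalizes_B_md[OF m] Omega_perms_conj_simple_refls[OF m]
        B_md_mult_perm_matrix_neq[OF m] Tits_axioms[OF m])
qed

end
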